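(* Let $\rho>0$, let $\mathcal{X}\subseteq\mathbb{R}^d$ be a nonempty closed convex set, let $f\colon\mathbb{R}^d\to\mathbb{R}$ be $\rho$-weakly convex, and set $\varphi=f+\delta_{\mathcal{X}}$, where $\delta_{\mathcal{X}}$ is the indicator function of $\mathcal{X}$ ($0$ on $\mathcal{X}$, $+\infty$ off $\mathcal{X}$). Suppose the stochastic subgradient oracle satisfies: (A1) one can generate i.i.d. realizations $\xi_0,\xi_1,\ldots\sim P$ from a probability space $(\Omega,\mathcal{F},P)$; (A2) there is an open set $U\supseteq\mathcal{X}$ and a measurable map $G\colon U\times\Omega\to\mathbb{R}^d$ with $\mathbb{E}_\xi[G(x,\xi)]\in\partial f(x)$ for all $x\in U$; (A3) there is $L\ge 0$ with $\mathbb{E}_\xi\|G(x,\xi)\|^2\le L^2$ for all $x\in\mathcal{X}$. Fix $T\ge 0$, $x_0\in\mathcal{X}$ and stepsizes $\alpha_0,\ldots,\alpha_T\ge 0$ with $\sum_{t=0}^T\alpha_t>0$. Define $x_{t+1}=\mathrm{proj}_{\mathcal{X}}\big(x_t-\alpha_t G(x_t,\xi_t)\big)$ for $t=0,\ldots,T$, and let $t^*\in\{0,\ldots,T\}$ be sampled (independently of the $\xi_t$) with $\mathbb{P}(t^*=t)=\alpha_t/\sum_{i=0}^T\alpha_i$. Then for every $\bar\rho>\rho$ and every $t\in\{0,\ldots,T\}$, $$\mathbb{E}\big[\varphi_{1/\bar\rho}(x_{t+1})\big]\le \mathbb{E}\big[\varphi_{1/\bar\rho}(x_t)\big]-\frac{\alpha_t(\bar\rho-\rho)}{\bar\rho}\,\mathbb{E}\big[\|\nabla\varphi_{1/\bar\rho}(x_t)\|^2\big]+\frac{\alpha_t^2\bar\rho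 L^2}{2},$$ and $$\mathbb{E}\big[\|\nabla\varphi_{1/\bar\rho}(x_{t^*})\|^2\big]\le\frac{\bar\rho}{\bar\rho-\rho}\cdot\frac{\big(\varphi_{1/\bar\rho}(x_0)-\min\varphi\big)+\frac{\bar\rho L^2}{2}\sum_{t=0}^T\alpha_t^2}{\sum_{t=0}^T\alpha_t}.$$ In particular, if $\alpha_t=\gamma/\sqrt{T+1}$ for all $t$, for some real $\gamma>0$, then $$\mathbb{E}\big[\|\nabla\varphi_{1/(2\rho)}(x_{t^*})\|^2\big]\le 2\cdot\frac{\big(\varphi_{1/(2\rho)}(x_0)-\min\varphi\big)+\rho L^2\gamma^2}{\gamma\sqrt{T+1}}.$$
   Context: For $\varphi\colon\mathbb{R}^d\to\mathbb{R}\cup\{+\infty\}$ and $x$ with $\varphi(x)$ finite, the subdifferential $\partial\varphi(x)$ is the set of $v\in\mathbb{R}^d$ with $\varphi(y)\ge\varphi(x)+\langle v,y-x\rangle+o(\|y-x\|)$ as $y\to x$. A function $g$ is $\rho$-weakly convex if $x\mapsto g(x)+\frac{\rho}{2}\|x\|^2$ is convex. For $\lambda>0$, the Moreau envelope is $\varphi_\lambda(x)=\min_y\{\varphi(y)+\frac{1}{2\lambda}\|y-x\|^2\}$ and the proximal map is $\mathrm{prox}_{\lambda\varphi}(x)=\operatorname{argmin}_y\{\varphi(y)+\frac{1}{2\lambda}\|y-x\|^2\}$; when $\varphi$ is $\rho$-weakly convex and lower semicontinuous and $0<\lambda<\rho^{-1}$, $\varphi_\lambda$ is $C^1$ with $\nabla\varphi_\lambda(x)=\lambda^{-1}(x-\mathrm{prox}_{\lambda\varphi}(x))$.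 $\min\varphi$ denotes $\inf_x\varphi(x)$. $\mathrm{proj}_{\mathcal{X}}$ is the Euclidean nearest-point projection. $\mathbb{E}$ denotes expectation over all randomness ($\xi_0,\xi_1,\ldots$ and $t^*$). *)

theory Defs
  imports "HOL-Analysis.Analysis" "HOL-Probability.Probability"
begin

definition weakly_convex :: "real \<Rightarrow> ('a::real_normed_vector \<Rightarrow> real) \<Rightarrow> bool" where
  "weakly_convex \<rho> g \<longleftrightarrow> convex_on UNIV (\<lambda>x. g x + \<rho> / 2 * (norm x)\<^sup>2)"

definition subdiff :: "('a::real_inner \<Rightarrow> real) \<Rightarrow> 'a \<Rightarrow> 'a set" where
  "subdiff g x = {v. \<forall>e>0. \<exists>\<delta>>0. \<forall>y. norm (y - x) < \<delta> \<longrightarrow>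
       g y \<ge> g x + inner v (y - x) - e * norm (y - x)}"

definition indic_fun :: "'a set \<Rightarrow> 'a \<Rightarrow> ereal" where
  "indic_fun X x = (if x \<in> X then 0 else \<infinity>)"

definition phi_of :: "('a \<Rightarrow> real) \<Rightarrow> 'a set \<Rightarrow> 'a \<Rightarrow> ereal" where
  "phi_of f X y = ereal (f y) + indic_fun X y"

definition moreau_env :: "('a::real_normed_vector \<Rightarrow> ereal) \<Rightarrow> real \<Rightarrow> 'a \<Rightarrow> ereal" where
  "moreau_env \<phi> lam x = (INF y. \<phi> y + ereal ((norm (y - x))\<^sup>2 / (2 * lam)))"

definition grad :: "('a::real_inner \<Rightarrow> real) \<Rightarrow> 'a \<Rightarrow> 'a" where
  "grad g x = (THE D. GDERIV g x :> D)"

primrec sgd_iter :: "'a::euclidean_space set \<Rightarrow> ('a \<Rightarrow> 'b \<Rightarrow> 'a) \<Rightarrow> (nat \<Rightarrow> real)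
    \<Rightarrow> (nat \<Rightarrow> 'w \<Rightarrow> 'b) \<Rightarrow> 'a \<Rightarrow> nat \<Rightarrow> 'w \<Rightarrow> 'a" where
  "sgd_iter X G \<alpha> \<xi> x0 0 \<omega> = x0"
| "sgd_iter X G \<alpha> \<xi> x0 (Suc t) \<omega> =
     closest_point X (sgd_iter X G \<alpha> \<xi> x0 t \<omega> - \<alpha> t *\<^sub>R G (sgd_iter X G \<alpha> \<xi> x0 t \<omega>) (\<xi> t \<omega>))"

end

(* Fix \<rho>b > \<rho>. On X the proximal objective y \<mapsto> f y + \<rho>b/2 |y - x|^2 is
   (\<rho>b - \<rho>)-strongly convex, so the proximal point x' of x exists and the envelope is squeezed
   between two quadratics around x; hence it is differentiable with gradient \<rho>b (x - x').
   Evaluating the proximal objective of x_(t+1) at x'_t, which lies in X, and using that the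
   projection is nonexpansive bounds the envelope at x_(t+1) by its value at x_t minus
   \<rho>b \<alpha>_t <G(x_t, \<xi>_t), x_t - x'_t> plus \<rho>b \<alpha>_t^2 |G|^2 / 2. As x_t is independent of \<xi>_t,
   averaging over \<xi>_t turns G into a subgradient v of f at x_t, and weak convexity together
   with the minimality of x'_t gives <v, x_t - x'_t> \<ge> (\<rho>b - \<rho>) |x_t - x'_t|^2. Summing the
   resulting descent inequality over t and averaging over the independent random index gives
   the bound on the gradient at the randomly chosen iterate. *)

theory Submission
  imports Defs
begin

lemma norm_add_square:
  fixes a b :: "'a::real_inner"
  shows "(norm (a + b))\<^sup>2 = (norm a)\<^sup>2 + 2 * inner a b + (norm b)\<^sup>2"
  by (simp add: power2_norm_eq_inner inner_add_left inner_add_right inner_commute)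

lemma norm_diff_square_diff:
  fixes a x y :: "'a::real_inner"
  shows "(norm (a - x))\<^sup>2 - (norm (a - y))\<^sup>2 = 2 * inner a (y - x) + (norm x)\<^sup>2 - (norm y)\<^sup>2"
  unfolding power2_norm_eq_inner
  by (simp add: inner_diff_left inner_diff_right inner_commute algebra_simps)

lemma norm_convex_comb_square:
  fixes a b :: "'a::real_inner"
  shows "(norm ((1 - t) *\<^sub>R a + t *\<^sub>R b))\<^sup>2
    = (1 - t) * (norm a)\<^sup>2 + t * (norm b)\<^sup>2 - t * (1 - t) * (norm (a - b))\<^sup>2"
  unfolding power2_norm_eq_inner
  by (simp add: inner_add_left inner_add_right inner_diff_left inner_diff_right
      inner_commute algebra_simps)

lemma square_add_le: "((a::real) + b)\<^sup>2 \<le> 2 * a\<^sup>2 + 2 * b\<^sup>2"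
proof -
  have "0 \<le> (a - b)\<^sup>2" by simp
  thus ?thesis by (simp add: power2_eq_square algebra_simps)
qed

lemma le_one_plus_square: "(r::real) \<le> 1 + r\<^sup>2"
proof -
  have "0 \<le> (r - 1/2)\<^sup>2 + 3/4" by simp
  thus ?thesis by (simp add: power2_eq_square algebra_simps)
qed

lemma nonneg_if_ge_neg_eps:
  fixes A c :: real
  assumes "\<And>e. e > 0 \<Longrightarrow> A \<ge> - e * c" and "c \<ge> 0"
  shows "A \<ge> 0"
proof (rule ccontr)
  assume "\<not> A \<ge> 0"
  hence A: "A < 0" by simp
  show False
  proof (cases "c = 0")
    case True thus ?thesis using assms(1)[of 1] A by simp
  next
    case False
    hence c: "c > 0" using assms(2) by simp
    have pos: "-A / (2 * c) > 0" using A c by (simp add: divide_neg_pos)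
    have "A \<ge> - (-A / (2 * c)) * c" using assms(1)[OF pos] .
    also have "- (-A / (2 * c)) * c = A / 2" using c by (simp add: field_simps)
    finally show False using A by simp
  qed
qed

lemma quadratic_exceeds:
  fixes m b c B r :: real
  assumes m: "m > 0" and b: "b \<ge> 0" and r: "r \<ge> max 1 (2 * (b + \<bar>c\<bar> + \<bar>B\<bar> + 1) / m)"
  shows "m / 2 * r\<^sup>2 - b * r - c > B"
proof -
  have r1: "r \<ge> 1" using r by simp
  have "r \<ge> 2 * (b + \<bar>c\<bar> + \<bar>B\<bar> + 1) / m" using r by simp
  hence "m / 2 * r \<ge> b + \<bar>c\<bar> + \<bar>B\<bar> + 1" using m by (simp add: field_simps)
  hence "m / 2 * r * r \<ge> (b + \<bar>c\<bar> + \<bar>B\<bar> + 1) * r" using r1 by (intro mult_right_mono) auto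
  moreover have "(\<bar>c\<bar> + \<bar>B\<bar> + 1) * r \<ge> (\<bar>c\<bar> + \<bar>B\<bar> + 1) * 1"
    using r1 by (intro mult_left_mono) auto
  ultimately show ?thesis by (simp add: power2_eq_square algebra_simps)
qed

section \<open>Weak convexity and gradients\<close>

lemma weakly_convex_subgradient_ineq_approx:
  fixes f :: "'a::real_inner \<Rightarrow> real"
  assumes wc: "weakly_convex \<rho> f" and rho: "\<rho> \<ge> 0" and v: "v \<in> subdiff f x" and e: "e > 0"
  shows "f y - f x - inner v (y - x) + \<rho> / 2 * (norm (y - x))\<^sup>2 \<ge> - e * norm (y - x)"
proof (cases "y = x")
  case False
  define d where "d = y - x"
  define g where "g z = f z + \<rho> / 2 * (norm z)\<^sup>2" for z
  have nd: "norm d > 0" using False by (simp add: d_def)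
  \<comment> \<open>compare the Frechet expansion at x with the chord of the convex g along a short segment\<close>
  obtain \<delta> where \<delta>: "\<delta> > 0"
    and fr: "\<And>z. norm (z - x) < \<delta> \<Longrightarrow> f z \<ge> f x + inner v (z - x) - e * norm (z - x)"
    using v e unfolding subdiff_def by blast
  define t where "t = min (1/2) (\<delta> / (2 * norm d))"
  have t0: "t > 0" and t1: "t \<le> 1" using \<delta> nd by (auto simp: t_def)
  have "t \<le> \<delta> / (2 * norm d)" by (simp add: t_def)
  hence "t * norm d \<le> \<delta> / 2" using nd by (simp add: field_simps)
  hence "norm ((x + t *\<^sub>R d) - x) < \<delta>" using t0 \<delta> by simp
  from fr[OF this] have fz: "f (x + t *\<^sub>R d) \<ge> f x + t * inner v d - e * (t * norm d)"
    using t0 by (simp add: inner_scaleR_right)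
  have "x + t *\<^sub>R d = (1 - t) *\<^sub>R x + t *\<^sub>R y" by (simp add: d_def algebra_simps)
  moreover have "convex_on UNIV g" using wc unfolding weakly_convex_def g_def .
  ultimately have gz: "g (x + t *\<^sub>R d) \<le> (1 - t) * g x + t * g y"
    using convex_onD[of UNIV g t x y] t0 t1 by simp
  have nz: "(norm (x + t *\<^sub>R d))\<^sup>2 = (norm x)\<^sup>2 + 2 * t * inner x d + t\<^sup>2 * (norm d)\<^sup>2"
    by (simp add: norm_add_square power_mult_distrib)
  have "g (x + t *\<^sub>R d) - g x \<ge> t * (inner v d - e * norm d + \<rho> * inner x d + \<rho> / 2 * t * (norm d)\<^sup>2)"
    using fz unfolding g_def nz by (simp add: algebra_simps power2_eq_square)
  hence "t * (g y - g x) \<ge> t * (inner v d - e * norm d + \<rho> * inner x d + \<rho> / 2 * t * (norm d)\<^sup>2)"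
    using gz by (simp add: algebra_simps)
  hence "g y - g x \<ge> inner v d - e * norm d + \<rho> * inner x d + \<rho> / 2 * t * (norm d)\<^sup>2"
    using t0 by (simp add: mult_le_cancel_left_pos)
  moreover have "\<rho> / 2 * t * (norm d)\<^sup>2 \<ge> 0" using rho t0 by simp
  moreover have "(norm y)\<^sup>2 = (norm x)\<^sup>2 + 2 * inner x d + (norm d)\<^sup>2"
    using norm_add_square[of x d] by (simp add: d_def)
  ultimately show ?thesis by (simp add: g_def d_def algebra_simps)
qed simp

lemma weakly_convex_subgradient_ineq:
  fixes f :: "'a::real_inner \<Rightarrow> real"
  assumes "weakly_convex \<rho> f" and "\<rho> \<ge> 0" and "v \<in> subdiff f x"
  shows "f y \<ge> f x + inner v (y - x) - \<rho> / 2 * (norm (y - x))\<^sup>2"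
proof -
  have "f y - f x - inner v (y - x) + \<rho> / 2 * (norm (y - x))\<^sup>2 \<ge> 0"
    by (rule nonneg_if_ge_neg_eps[OF weakly_convex_subgradient_ineq_approx[OF assms]]) auto
  thus ?thesis by simp
qed

lemma weakly_convex_continuous:
  fixes f :: "'a::euclidean_space \<Rightarrow> real"
  assumes "weakly_convex \<rho> f"
  shows "continuous_on S f"
proof -
  have "continuous_on UNIV (\<lambda>x. f x + \<rho> / 2 * (norm x)\<^sup>2)"
    using assms unfolding weakly_convex_def by (intro convex_on_continuous) auto
  hence "continuous_on UNIV (\<lambda>x. (f x + \<rho> / 2 * (norm x)\<^sup>2) - \<rho> / 2 * (norm x)\<^sup>2)"
    by (rule continuous_on_diff) (auto intro!: continuous_intros)
  thus ?thesis using continuous_on_subset by fastforce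
qed

lemma gderiv_if_quadratic_sandwich:
  fixes F :: "'a::real_inner \<Rightarrow> real"
  assumes "\<And>y. \<bar>F y - F x - inner (y - x) D\<bar> \<le> C * (norm (y - x))\<^sup>2"
  shows "GDERIV F x :> D"
  unfolding gderiv_def has_derivative_iff_norm
proof
  show "bounded_linear (\<lambda>h. inner h D)" by (rule bounded_linear_inner_left)
  show "((\<lambda>y. norm (F y - F x - inner (y - x) D) / norm (y - x)) \<longlongrightarrow> 0) (at x)"
  proof (rule Lim_null_comparison)
    show "\<forall>\<^sub>F y in at x. norm (norm (F y - F x - inner (y - x) D) / norm (y - x)) \<le> C * norm (y - x)"
    proof (rule always_eventually, rule allI)
      fix y
      show "norm (norm (F y - F x - inner (y - x) D) / norm (y - x)) \<le> C * norm (y - x)"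
      proof (cases "y = x")
        case True thus ?thesis by simp
      next
        case False
        hence n: "norm (y - x) > 0" by simp
        have "\<bar>F y - F x - inner (y - x) D\<bar> / norm (y - x) \<le> C * (norm (y - x))\<^sup>2 / norm (y - x)"
          using assms[of y] n by (intro divide_right_mono) auto
        also have "\<dots> = C * norm (y - x)" using n by (simp add: power2_eq_square)
        finally show ?thesis by simp
      qed
    qed
    show "((\<lambda>y. C * norm (y - x)) \<longlongrightarrow> 0) (at x)"
    proof -
      have "((\<lambda>y. C * norm (y - x)) \<longlongrightarrow> C * norm (x - x)) (at x)"
        by (intro tendsto_intros)
      thus ?thesis by simp
    qed
  qed
qed

lemma grad_eqI:
  assumes "GDERIV F x :> D" shows "grad F x = D"
  unfolding grad_def
proof (rule the_equality)
  show "GDERIV F x :> D" by (rule assms)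
  fix D' assume "GDERIV F x :> D'"
  hence "(\<lambda>h. inner h D') = (\<lambda>h. inner h D)"
    using assms unfolding gderiv_def by (rule has_derivative_unique)
  hence "inner (D' - D) D' = inner (D' - D) D" by metis
  hence "inner (D' - D) (D' - D) = 0" by (simp add: inner_diff_right)
  thus "D' = D" by simp
qed

section \<open>The Moreau envelope of f plus the indicator of X\<close>

locale weakly_convex_prox =
  fixes \<rho> \<rho>b :: real and f :: "'a::euclidean_space \<Rightarrow> real" and X :: "'a set" and z0 v0 :: 'a
  assumes rho_pos: "\<rho> > 0" and rhob_gt: "\<rho>b > \<rho>"
    and X_closed: "closed X" and X_convex: "convex X" and wc: "weakly_convex \<rho> f"
    and z0_in: "z0 \<in> X" and v0_subgrad: "v0 \<in> subdiff f z0"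
begin

definition prox_obj :: "'a \<Rightarrow> 'a \<Rightarrow> real" where
  "prox_obj x y = f y + \<rho>b / 2 * (norm (y - x))\<^sup>2"

definition \<mu> :: real where "\<mu> = \<rho>b - \<rho>"

lemma mu_pos: "\<mu> > 0"
  using rhob_gt by (simp add: \<mu>_def)

lemma rhob_pos: "\<rho>b > 0"
  using rho_pos rhob_gt by simp

lemma continuous_on_f: "continuous_on S f"
  using weakly_convex_continuous[OF wc] .

lemma continuous_on_prox_obj: "continuous_on S (prox_obj x)"
  unfolding prox_obj_def by (intro continuous_intros continuous_on_f)

text \<open>The subgradient v0 at z0 gives a quadratic minorant of f, which makes the
  proximal objective coercive.\<close>
lemma prox_obj_coercive:
  "prox_obj x y \<ge> \<mu> / 2 * (norm (y - x))\<^sup>2 - (norm v0 + \<rho> * norm (x - z0)) * norm (y - x)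
      + (f z0 - norm v0 * norm (x - z0) - \<rho> / 2 * (norm (x - z0))\<^sup>2)"
proof -
  define u where "u = y - x"
  define w where "w = x - z0"
  have yz: "y - z0 = u + w" by (simp add: u_def w_def)
  have f_low: "f y \<ge> f z0 + inner v0 (u + w) - \<rho> / 2 * (norm (u + w))\<^sup>2"
    using weakly_convex_subgradient_ineq[OF wc _ v0_subgrad, of y] rho_pos yz by simp
  have "\<bar>inner v0 (u + w)\<bar> \<le> norm v0 * norm (u + w)" by (rule Cauchy_Schwarz_ineq2)
  also have "\<dots> \<le> norm v0 * (norm u + norm w)" by (intro mult_left_mono norm_triangle_ineq) auto
  finally have lin: "inner v0 (u + w) \<ge> - (norm v0 * (norm u + norm w))" by linarith
  have "(norm (u + w))\<^sup>2 \<le> (norm u + norm w)\<^sup>2" by (intro power_mono norm_triangle_ineq) auto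
  hence "\<rho> / 2 * (norm (u + w))\<^sup>2 \<le> \<rho> / 2 * ((norm u)\<^sup>2 + 2 * norm u * norm w + (norm w)\<^sup>2)"
    using rho_pos by (intro mult_left_mono) (auto simp: power2_eq_square algebra_simps)
  hence "prox_obj x y \<ge> f z0 - norm v0 * (norm u + norm w)
      - \<rho> / 2 * ((norm u)\<^sup>2 + 2 * norm u * norm w + (norm w)\<^sup>2) + \<rho>b / 2 * (norm u)\<^sup>2"
    using f_low lin unfolding prox_obj_def u_def by linarith
  thus ?thesis unfolding \<mu>_def u_def[symmetric] w_def[symmetric]
    by (simp add: algebra_simps diff_divide_distrib)
qed

lemma prox_obj_attains_min: "\<exists>p\<in>X. \<forall>y\<in>X. prox_obj x p \<le> prox_obj x y"
proof -
  define b where "b = norm v0 + \<rho> * norm (x - z0)"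
  define c where "c = - (f z0 - norm v0 * norm (x - z0) - \<rho> / 2 * (norm (x - z0))\<^sup>2)"
  define B where "B = prox_obj x z0"
  define R where "R = max (max 1 (2 * (b + \<bar>c\<bar> + \<bar>B\<bar> + 1) / \<mu>)) (norm (z0 - x))"
  define K where "K = X \<inter> cball x R"
  have b0: "b \<ge> 0" using rho_pos by (simp add: b_def)
  have z0K: "z0 \<in> K" unfolding K_def using z0_in by (auto simp: R_def dist_norm norm_minus_commute)
  have "compact K" unfolding K_def using X_closed by (intro closed_Int_compact) auto
  then obtain p where p: "p \<in> K" "\<forall>y\<in>K. prox_obj x p \<le> prox_obj x y"
    using continuous_attains_inf[OF _ _ continuous_on_prox_obj] z0K by blast
  have "prox_obj x p \<le> prox_obj x y" if y: "y \<in> X" for y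
  proof (cases "y \<in> K")
    case False
    hence "norm (y - x) \<ge> max 1 (2 * (b + \<bar>c\<bar> + \<bar>B\<bar> + 1) / \<mu>)"
      using y by (auto simp: K_def R_def dist_norm norm_minus_commute)
    from quadratic_exceeds[OF mu_pos b0 this]
    have "prox_obj x y > B" using prox_obj_coercive[where x=x and y=y] unfolding b_def c_def by linarith
    thus ?thesis using p z0K unfolding B_def by fastforce
  qed (use p in auto)
  thus ?thesis using p(1) unfolding K_def by blast
qed

text \<open>prox and env are the proximal map and the Moreau envelope with parameter 1/\<rho>b of
  f plus the indicator of X, see moreau_env_eq_env.\<close>
definition prox :: "'a \<Rightarrow> 'a" where
  "prox x = (SOME p. p \<in> X \<and> (\<forall>y\<in>X. prox_obj x p \<le> prox_obj x y))"

definition env :: "'a \<Rightarrow> real" where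
  "env x = prox_obj x (prox x)"

lemma prox_in: "prox x \<in> X" and prox_min: "y \<in> X \<Longrightarrow> env x \<le> prox_obj x y"
proof -
  have "prox x \<in> X \<and> (\<forall>y\<in>X. prox_obj x (prox x) \<le> prox_obj x y)"
    unfolding prox_def using someI_ex[OF prox_obj_attains_min[of x, unfolded Bex_def]] .
  thus "prox x \<in> X" "y \<in> X \<Longrightarrow> env x \<le> prox_obj x y" by (auto simp: env_def)
qed

lemma prox_obj_strongly_convex:
  assumes t: "0 \<le> t" "t \<le> 1"
  shows "prox_obj x ((1 - t) *\<^sub>R q + t *\<^sub>R y)
    \<le> (1 - t) * prox_obj x q + t * prox_obj x y - \<mu> / 2 * t * (1 - t) * (norm (y - q))\<^sup>2"
proof -
  define z where "z = (1 - t) *\<^sub>R q + t *\<^sub>R y"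
  define D where "D = (norm (y - q))\<^sup>2"
  define g where "g z = f z + \<rho> / 2 * (norm z)\<^sup>2" for z
  have "convex_on UNIV g" using wc unfolding weakly_convex_def g_def .
  hence gz: "g z \<le> (1 - t) * g q + t * g y"
    unfolding z_def using convex_onD[of UNIV g t q y] t by simp
  have "z - x = (1 - t) *\<^sub>R (q - x) + t *\<^sub>R (y - x)" unfolding z_def by (simp add: algebra_simps)
  hence n1: "(norm (z - x))\<^sup>2 = (1 - t) * (norm (q - x))\<^sup>2 + t * (norm (y - x))\<^sup>2 - t * (1 - t) * D"
    unfolding D_def using norm_convex_comb_square[of t "q - x" "y - x"] by (simp add: norm_minus_commute)
  have n2: "(norm z)\<^sup>2 = (1 - t) * (norm q)\<^sup>2 + t * (norm y)\<^sup>2 - t * (1 - t) * D"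
    unfolding z_def D_def using norm_convex_comb_square[of t q y] by (simp add: norm_minus_commute)
  have "prox_obj x z = g z - \<rho> / 2 * ((1 - t) * (norm q)\<^sup>2 + t * (norm y)\<^sup>2 - t * (1 - t) * D)
       + \<rho>b / 2 * ((1 - t) * (norm (q - x))\<^sup>2 + t * (norm (y - x))\<^sup>2 - t * (1 - t) * D)"
    unfolding prox_obj_def g_def n1[symmetric] n2[symmetric] by simp
  moreover have "(1 - t) * prox_obj x q + t * prox_obj x y - \<mu> / 2 * t * (1 - t) * D = (1 - t) * g q + t * g y
       - \<rho> / 2 * ((1 - t) * (norm q)\<^sup>2 + t * (norm y)\<^sup>2 - t * (1 - t) * D)
       + \<rho>b / 2 * ((1 - t) * (norm (q - x))\<^sup>2 + t * (norm (y - x))\<^sup>2 - t * (1 - t) * D)"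
    unfolding prox_obj_def g_def \<mu>_def by (simp add: field_simps)
  ultimately show ?thesis using gz unfolding z_def D_def by linarith
qed

lemma prox_obj_quadratic_growth:
  assumes y: "y \<in> X"
  shows "prox_obj x y \<ge> env x + \<mu> / 2 * (norm (y - prox x))\<^sup>2"
proof -
  define q where "q = prox x"
  define D where "D = (norm (y - q))\<^sup>2"
  have segment: "prox_obj x y - prox_obj x q - \<mu> / 2 * D \<ge> - \<mu> / 2 * t * D"
    if t: "0 < t" "t \<le> 1" for t
  proof -
    have "(1 - t) *\<^sub>R q + t *\<^sub>R y \<in> X"
      unfolding q_def using X_convex prox_in y t by (auto intro: convexD_alt)
    hence "prox_obj x q \<le> prox_obj x ((1 - t) *\<^sub>R q + t *\<^sub>R y)"
      using prox_min unfolding q_def env_def by blast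
    moreover have "t * (prox_obj x y - prox_obj x q - \<mu> / 2 * D) - t * (- \<mu> / 2 * t * D)
        = ((1 - t) * prox_obj x q + t * prox_obj x y - \<mu> / 2 * t * (1 - t) * D) - prox_obj x q"
      by (simp add: field_simps)
    ultimately have "t * (prox_obj x y - prox_obj x q - \<mu> / 2 * D) \<ge> t * (- \<mu> / 2 * t * D)"
      using prox_obj_strongly_convex[of t x q y] t unfolding D_def by linarith
    thus ?thesis by (rule mult_left_le_imp_le[OF _ t(1)])
  qed
  have D0: "D \<ge> 0" unfolding D_def by simp
  have "prox_obj x y - prox_obj x q - \<mu> / 2 * D \<ge> 0"
  proof (rule nonneg_if_ge_neg_eps[where c = "\<mu> / 2 * D"])
    fix e :: real assume e: "e > 0"
    define t where "t = min 1 e"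
    have t: "0 < t" "t \<le> 1" "t \<le> e" using e by (auto simp: t_def)
    have "- e * (\<mu> / 2 * D) \<le> - \<mu> / 2 * t * D"
      using t mu_pos D0 by (simp add: mult_right_mono mult_left_mono algebra_simps)
    also have "\<dots> \<le> prox_obj x y - prox_obj x q - \<mu> / 2 * D" using segment t by simp
    finally show "prox_obj x y - prox_obj x q - \<mu> / 2 * D \<ge> - e * (\<mu> / 2 * D)" .
  qed (use mu_pos D0 in simp)
  thus ?thesis unfolding env_def q_def D_def by simp
qed

lemma moreau_env_eq_env: "moreau_env (phi_of f X) (1 / \<rho>b) x = ereal (env x)"
proof -
  have eq: "(norm (y - x))\<^sup>2 / (2 * (1 / \<rho>b)) = \<rho>b / 2 * (norm (y - x))\<^sup>2" for y by simp
  show ?thesis unfolding moreau_env_def eq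
  proof (rule antisym)
    show "(INF y. phi_of f X y + ereal (\<rho>b / 2 * (norm (y - x))\<^sup>2)) \<le> ereal (env x)"
      by (rule INF_lower2[of "prox x"]) (auto simp: phi_of_def indic_fun_def prox_in env_def prox_obj_def)
    have "ereal (env x) \<le> phi_of f X y + ereal (\<rho>b / 2 * (norm (y - x))\<^sup>2)" for y
      using prox_min[of y x] by (cases "y \<in> X") (auto simp: phi_of_def indic_fun_def prox_obj_def)
    thus "ereal (env x) \<le> (INF y. phi_of f X y + ereal (\<rho>b / 2 * (norm (y - x))\<^sup>2))"
      by (rule INF_greatest)
  qed
qed

lemma env_le_quadratic:
  "env y \<le> env x + \<rho>b * inner (x - prox x) (y - x) + \<rho>b / 2 * (norm (y - x))\<^sup>2"
proof -
  have "env y \<le> prox_obj y (prox x)" by (rule prox_min[OF prox_in])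
  also have "prox_obj y (prox x) = env x + \<rho>b / 2 * ((norm (prox x - y))\<^sup>2 - (norm (prox x - x))\<^sup>2)"
    unfolding env_def prox_obj_def by (simp add: algebra_simps)
  also have "(norm (prox x - y))\<^sup>2 - (norm (prox x - x))\<^sup>2 = 2 * inner (x - prox x) (y - x) + (norm (y - x))\<^sup>2"
    unfolding norm_diff_square_diff unfolding power2_norm_eq_inner
    by (simp add: inner_diff_left inner_diff_right inner_commute algebra_simps)
  finally show ?thesis by (simp add: algebra_simps)
qed

lemma env_ge_quadratic:
  "env y \<ge> env x + \<rho>b * inner (x - prox x) (y - x) - \<rho>b\<^sup>2 / (2 * \<mu>) * (norm (y - x))\<^sup>2"
proof -
  have "env y - env x \<ge> \<rho>b / 2 * ((norm (prox y - y))\<^sup>2 - (norm (prox y - x))\<^sup>2)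
      + \<mu> / 2 * (norm (prox y - prox x))\<^sup>2"
    using prox_obj_quadratic_growth[OF prox_in[of y], where x = x] unfolding env_def prox_obj_def
    by (simp add: algebra_simps)
  moreover have "(norm (prox y - y))\<^sup>2 - (norm (prox y - x))\<^sup>2
      = 2 * inner (x - prox x) (y - x) + 2 * inner (prox x - prox y) (y - x) + (norm (y - x))\<^sup>2"
    unfolding norm_diff_square_diff unfolding power2_norm_eq_inner
    by (simp add: inner_diff_left inner_diff_right inner_commute algebra_simps)
  moreover have "\<rho>b * inner (prox x - prox y) (y - x) + \<mu> / 2 * (norm (prox y - prox x))\<^sup>2
      \<ge> - \<rho>b\<^sup>2 / (2 * \<mu>) * (norm (y - x))\<^sup>2"
  proof -
    have "0 \<le> \<mu> / 2 * (norm ((prox x - prox y) + (\<rho>b / \<mu>) *\<^sub>R (y - x)))\<^sup>2" using mu_pos by simp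
    also have "\<dots> = \<mu> / 2 * ((norm (prox x - prox y))\<^sup>2
        + 2 * (\<rho>b / \<mu>) * inner (prox x - prox y) (y - x) + (\<rho>b / \<mu>)\<^sup>2 * (norm (y - x))\<^sup>2)"
      by (simp only: norm_add_square) (simp add: power_mult_distrib power_divide power2_abs)
    also have "\<dots> = \<mu> / 2 * (norm (prox x - prox y))\<^sup>2 + \<rho>b * inner (prox x - prox y) (y - x)
        + \<rho>b\<^sup>2 / (2 * \<mu>) * (norm (y - x))\<^sup>2"
      using mu_pos by (simp add: field_simps power2_eq_square)
    finally show ?thesis by (simp add: norm_minus_commute)
  qed
  moreover have "\<rho>b / 2 * (norm (y - x))\<^sup>2 \<ge> 0" using rhob_pos by simp
  ultimately show ?thesis by (simp add: algebra_simps)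
qed

lemma env_has_gderiv: "GDERIV env x :> \<rho>b *\<^sub>R (x - prox x)"
proof (rule gderiv_if_quadratic_sandwich[where C = "\<rho>b / 2 + \<rho>b\<^sup>2 / (2 * \<mu>)"])
  fix y
  have i: "inner (y - x) (\<rho>b *\<^sub>R (x - prox x)) = \<rho>b * inner (x - prox x) (y - x)"
    by (simp add: inner_commute)
  have "\<rho>b / 2 * (norm (y - x))\<^sup>2 \<le> (\<rho>b / 2 + \<rho>b\<^sup>2 / (2 * \<mu>)) * (norm (y - x))\<^sup>2"
    and "\<rho>b\<^sup>2 / (2 * \<mu>) * (norm (y - x))\<^sup>2 \<le> (\<rho>b / 2 + \<rho>b\<^sup>2 / (2 * \<mu>)) * (norm (y - x))\<^sup>2"
    using mu_pos rhob_pos by (intro mult_right_mono; simp)+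
  thus "\<bar>env y - env x - inner (y - x) (\<rho>b *\<^sub>R (x - prox x))\<bar>
      \<le> (\<rho>b / 2 + \<rho>b\<^sup>2 / (2 * \<mu>)) * (norm (y - x))\<^sup>2"
    unfolding i using env_le_quadratic[of y x] env_ge_quadratic[of x y] by (simp add: abs_le_iff)
qed

lemma grad_moreau_env:
  "grad (\<lambda>z. real_of_ereal (moreau_env (phi_of f X) (1 / \<rho>b) z)) x = \<rho>b *\<^sub>R (x - prox x)"
  using grad_eqI[OF env_has_gderiv] by (simp add: moreau_env_eq_env)

lemma prox_lipschitz: "norm (prox x - prox y) \<le> \<rho>b / \<mu> * norm (x - y)"
proof -
  have "\<rho>b / 2 * (((norm (prox y - x))\<^sup>2 - (norm (prox y - y))\<^sup>2)
      + ((norm (prox x - y))\<^sup>2 - (norm (prox x - x))\<^sup>2)) \<ge> \<mu> * (norm (prox x - prox y))\<^sup>2"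
    using prox_obj_quadratic_growth[OF prox_in, of x y] prox_obj_quadratic_growth[OF prox_in, of y x]
    unfolding env_def prox_obj_def by (simp add: algebra_simps norm_minus_commute)
  moreover have "((norm (prox y - x))\<^sup>2 - (norm (prox y - y))\<^sup>2)
      + ((norm (prox x - y))\<^sup>2 - (norm (prox x - x))\<^sup>2) = 2 * inner (prox x - prox y) (x - y)"
    unfolding norm_diff_square_diff by (simp add: inner_diff_left inner_diff_right inner_commute algebra_simps)
  ultimately have "\<mu> * (norm (prox x - prox y))\<^sup>2 \<le> \<rho>b * inner (prox x - prox y) (x - y)" by simp
  also have "\<dots> \<le> \<rho>b * (norm (prox x - prox y) * norm (x - y))"
    using rhob_pos by (intro mult_left_mono) (auto simp: norm_cauchy_schwarz)
  finally have "\<mu> * norm (prox x - prox y) * norm (prox x - prox y)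
      \<le> (\<rho>b * norm (x - y)) * norm (prox x - prox y)"
    by (simp add: power2_eq_square algebra_simps)
  hence "\<mu> * norm (prox x - prox y) \<le> \<rho>b * norm (x - y)"
    by (cases "prox x = prox y") (use rhob_pos in \<open>auto simp: mult_le_cancel_right\<close>)
  thus ?thesis using mu_pos by (simp add: field_simps)
qed

lemma continuous_on_prox: "continuous_on S prox"
proof -
  have "(\<rho>b / \<mu>)-lipschitz_on S prox"
    by (rule lipschitz_onI) (use prox_lipschitz mu_pos rhob_pos in \<open>auto simp: dist_norm\<close>)
  thus ?thesis by (rule lipschitz_on_continuous_on)
qed

lemma continuous_on_env: "continuous_on S env"
  unfolding env_def prox_obj_def
  by (intro continuous_intros continuous_on_prox continuous_on_compose2[OF continuous_on_f continuous_on_prox]) auto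

lemma inf_phi_le_env: "(INF y. phi_of f X y) \<le> ereal (env x)"
proof -
  have "(INF y. phi_of f X y) \<le> phi_of f X (prox x)" by (rule INF_lower) simp
  also have "\<dots> = ereal (f (prox x))" using prox_in by (simp add: phi_of_def indic_fun_def)
  also have "\<dots> \<le> ereal (env x)" using rhob_pos by (simp add: env_def prox_obj_def)
  finally show ?thesis .
qed

text \<open>The proximal point of x lies in X, so projecting onto X does not increase the distance
  to it.\<close>
lemma env_projected_step:
  "env (closest_point X (x - a *\<^sub>R w))
    \<le> env x - \<rho>b * a * inner w (x - prox x) + \<rho>b * a\<^sup>2 / 2 * (norm w)\<^sup>2"
proof -
  define y where "y = closest_point X (x - a *\<^sub>R w)"
  have "env y \<le> prox_obj y (prox x)" by (rule prox_min[OF prox_in])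
  also have "norm (prox x - y) \<le> norm (prox x - (x - a *\<^sub>R w))"
    using closest_point_lipschitz[OF X_convex X_closed, of "prox x" "x - a *\<^sub>R w"] z0_in
    unfolding y_def closest_point_self[OF prox_in] by (auto simp: dist_norm)
  hence "prox_obj y (prox x) \<le> f (prox x) + \<rho>b / 2 * (norm (prox x - (x - a *\<^sub>R w)))\<^sup>2"
    unfolding prox_obj_def using rhob_pos by (simp add: mult_left_mono power_mono)
  also have "(norm (prox x - (x - a *\<^sub>R w)))\<^sup>2
      = (norm (prox x - x))\<^sup>2 - 2 * a * inner w (x - prox x) + a\<^sup>2 * (norm w)\<^sup>2"
    unfolding power2_norm_eq_inner
    by (simp add: inner_diff_left inner_diff_right inner_commute algebra_simps power2_eq_square)
  finally show ?thesis unfolding y_def env_def prox_obj_def by (simp add: algebra_simps)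
qed

lemma subgradient_inner_prox_ge:
  assumes x: "x \<in> X" and v: "v \<in> subdiff f x"
  shows "inner v (x - prox x) \<ge> \<mu> * (norm (x - prox x))\<^sup>2"
proof -
  have "f (prox x) \<ge> f x + inner v (prox x - x) - \<rho> / 2 * (norm (prox x - x))\<^sup>2"
    using weakly_convex_subgradient_ineq[OF wc _ v] rho_pos by simp
  moreover have "f x \<ge> f (prox x) + \<rho>b / 2 * (norm (x - prox x))\<^sup>2 + \<mu> / 2 * (norm (x - prox x))\<^sup>2"
    using prox_obj_quadratic_growth[OF x, of x] unfolding env_def prox_obj_def by (simp add: norm_minus_commute)
  moreover have "inner v (prox x - x) = - inner v (x - prox x)" by (simp add: inner_diff_right)
  ultimately show ?thesis unfolding \<mu>_def by (simp add: norm_minus_commute field_simps)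
qed

lemma env_quadratic_growth:
  obtains A B where "\<And>x. \<bar>env x\<bar> \<le> A + B * (norm (x - z0))\<^sup>2" and "B \<ge> 0"
proof -
  define a where "a = \<rho>b * norm (z0 - prox z0)"
  define B where "B = a + \<rho>b / 2 + \<rho>b\<^sup>2 / (2 * \<mu>)"
  have a0: "a \<ge> 0" using rhob_pos by (simp add: a_def)
  have "\<bar>env x\<bar> \<le> (\<bar>env z0\<bar> + a) + B * (norm (x - z0))\<^sup>2" for x
  proof -
    define W where "W = norm (x - z0)"
    have "\<bar>\<rho>b * inner (z0 - prox z0) (x - z0)\<bar> \<le> a * W"
      using rhob_pos Cauchy_Schwarz_ineq2[of "z0 - prox z0" "x - z0"]
      by (simp add: a_def W_def abs_mult mult_left_mono)
    also have "\<dots> \<le> a + a * W\<^sup>2"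
      using mult_left_mono[OF le_one_plus_square[of W] a0] by (simp add: algebra_simps)
    finally have lin: "\<bar>\<rho>b * inner (z0 - prox z0) (x - z0)\<bar> \<le> a + a * W\<^sup>2" .
    have "B * W\<^sup>2 = a * W\<^sup>2 + \<rho>b / 2 * W\<^sup>2 + \<rho>b\<^sup>2 / (2 * \<mu>) * W\<^sup>2" by (simp add: B_def algebra_simps)
    moreover have "\<rho>b / 2 * W\<^sup>2 \<ge> 0" "\<rho>b\<^sup>2 / (2 * \<mu>) * W\<^sup>2 \<ge> 0" using rhob_pos mu_pos by simp_all
    ultimately show ?thesis
      using env_le_quadratic[of x z0] env_ge_quadratic[of z0 x] lin unfolding W_def by linarith
  qed
  moreover have "B \<ge> 0" using a0 mu_pos rhob_pos by (simp add: B_def)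
  ultimately show ?thesis using that by blast
qed

lemma norm_grad_env_quadratic_growth:
  obtains A B where "\<And>x. (norm (\<rho>b *\<^sub>R (x - prox x)))\<^sup>2 \<le> A + B * (norm (x - z0))\<^sup>2" and "B \<ge> 0"
proof -
  define B where "B = 2 * \<rho>b\<^sup>2 * (1 + \<rho>b / \<mu>)\<^sup>2"
  have "(norm (\<rho>b *\<^sub>R (x - prox x)))\<^sup>2 \<le> 2 * \<rho>b\<^sup>2 * (norm (z0 - prox z0))\<^sup>2 + B * (norm (x - z0))\<^sup>2"
    for x
  proof -
    define W where "W = norm (x - z0)"
    have "norm (x - prox x) = norm ((x - z0) + (z0 - prox z0) + (prox z0 - prox x))" by simp
    also have "\<dots> \<le> norm (x - z0) + norm (z0 - prox z0) + norm (prox z0 - prox x)"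
      by (intro norm_triangle_le add_right_mono norm_triangle_ineq)
    also have "norm (prox z0 - prox x) \<le> \<rho>b / \<mu> * W"
      using prox_lipschitz[of z0 x] by (simp add: W_def norm_minus_commute)
    finally have "norm (x - prox x) \<le> (1 + \<rho>b / \<mu>) * W + norm (z0 - prox z0)"
      by (simp add: W_def algebra_simps)
    hence "(norm (x - prox x))\<^sup>2 \<le> ((1 + \<rho>b / \<mu>) * W + norm (z0 - prox z0))\<^sup>2"
      by (intro power_mono) auto
    also have "\<dots> \<le> 2 * ((1 + \<rho>b / \<mu>) * W)\<^sup>2 + 2 * (norm (z0 - prox z0))\<^sup>2" by (rule square_add_le)
    finally have "\<rho>b\<^sup>2 * (norm (x - prox x))\<^sup>2
        \<le> \<rho>b\<^sup>2 * (2 * ((1 + \<rho>b / \<mu>) * W)\<^sup>2 + 2 * (norm (z0 - prox z0))\<^sup>2)"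
      by (intro mult_left_mono) auto
    moreover have "(norm (\<rho>b *\<^sub>R (x - prox x)))\<^sup>2 = \<rho>b\<^sup>2 * (norm (x - prox x))\<^sup>2"
      by (simp add: power_mult_distrib)
    moreover have "((1 + \<rho>b / \<mu>) * W)\<^sup>2 = (1 + \<rho>b / \<mu>)\<^sup>2 * W\<^sup>2" by (simp add: power_mult_distrib)
    ultimately show ?thesis unfolding B_def W_def by (simp add: algebra_simps)
  qed
  moreover have "B \<ge> 0" by (simp add: B_def)
  ultimately show ?thesis using that by blast
qed

end

section \<open>Projected stochastic subgradient iterates\<close>

lemma closest_point_borel:
  fixes X :: "'a::euclidean_space set"
  assumes "convex X" and "closed X" and "X \<noteq> {}"
  shows "closest_point X \<in> borel_measurable borel"
proof -
  have "1-lipschitz_on UNIV (closest_point X)"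
    by (rule lipschitz_onI) (use closest_point_lipschitz[OF assms] in auto)
  hence "continuous_on UNIV (closest_point X)" by (rule lipschitz_on_continuous_on)
  thus ?thesis by (rule borel_measurable_continuous_onI)
qed

lemma closest_point_step_dist_square:
  fixes X :: "'a::euclidean_space set"
  assumes "convex X" and "closed X" and z: "z \<in> X"
  shows "(norm (closest_point X (x - a *\<^sub>R w) - z))\<^sup>2 \<le> 2 * (norm (x - z))\<^sup>2 + 2 * a\<^sup>2 * (norm w)\<^sup>2"
proof -
  have "norm (closest_point X (x - a *\<^sub>R w) - z) \<le> norm ((x - z) + (- (a *\<^sub>R w)))"
    using closest_point_lipschitz[OF assms(1,2), of "x - a *\<^sub>R w" z] z
    unfolding closest_point_self[OF z] by (auto simp: dist_norm algebra_simps)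
  also have "\<dots> \<le> norm (x - z) + \<bar>a\<bar> * norm w"
    using norm_triangle_ineq[of "x - z" "- (a *\<^sub>R w)"] by simp
  finally have "(norm (closest_point X (x - a *\<^sub>R w) - z))\<^sup>2 \<le> (norm (x - z) + \<bar>a\<bar> * norm w)\<^sup>2"
    by (intro power_mono) auto
  also have "\<dots> \<le> 2 * (norm (x - z))\<^sup>2 + 2 * (\<bar>a\<bar> * norm w)\<^sup>2" by (rule square_add_le)
  finally show ?thesis by (simp add: power_mult_distrib)
qed

text \<open>The iterates as a function of the whole sample path s, with the t-th sample s t.\<close>
abbreviation sgd_path where
  "sgd_path X G \<alpha> x0 t s \<equiv> sgd_iter X G \<alpha> (\<lambda>i s. s i) x0 t s"

lemma sgd_iter_eq_sgd_path: "sgd_iter X G \<alpha> \<xi> x0 t \<omega> = sgd_path X G \<alpha> x0 t (\<lambda>i. \<xi> i \<omega>)"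
  by (induction t) auto

lemma sgd_path_cong: "(\<And>i. i < t \<Longrightarrow> s i = s' i) \<Longrightarrow> sgd_path X G \<alpha> x0 t s = sgd_path X G \<alpha> x0 t s'"
  by (induction t) auto

lemma sgd_iter_in: "closed X \<Longrightarrow> x0 \<in> X \<Longrightarrow> sgd_iter X G \<alpha> \<xi> x0 t \<omega> \<in> X"
  by (induction t) (auto intro: closest_point_in_set)

locale proj_sgd =
  fixes \<rho> L :: real and X U :: "'a::euclidean_space set" and f :: "'a \<Rightarrow> real"
    and P :: "'b measure" and M :: "'w measure" and \<xi> :: "nat \<Rightarrow> 'w \<Rightarrow> 'b"
    and G :: "'a \<Rightarrow> 'b \<Rightarrow> 'a" and x0 :: 'a and \<alpha> :: "nat \<Rightarrow> real"
  assumes rho_pos: "\<rho> > 0"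
    and X_closed: "closed X" and X_convex: "convex X"
    and f_wc: "weakly_convex \<rho> f"
    and P_prob: "prob_space P"
    and M_prob: "prob_space M"
    and xi_meas: "\<And>i. \<xi> i \<in> measurable M P"
    and xi_distr: "\<And>i. distr M P (\<xi> i) = P"
    and xi_indep: "prob_space.indep_vars M (\<lambda>_. P) \<xi> UNIV"
    and X_sub_U: "X \<subseteq> U"
    and G_meas: "(\<lambda>(x, \<omega>). G x \<omega>) \<in> borel_measurable (restrict_space borel U \<Otimes>\<^sub>M P)"
    and G_integrable: "\<And>x. x \<in> U \<Longrightarrow> integrable P (G x)"
    and G_subgrad: "\<And>x. x \<in> U \<Longrightarrow> (\<integral>\<omega>. G x \<omega> \<partial>P) \<in> subdiff f x"
    and G_bound: "\<And>x. x \<in> X \<Longrightarrow> (\<integral>\<^sup>+\<omega>. ennreal ((norm (G x \<omega>))\<^sup>2) \<partial>P) \<le> ennreal (L\<^sup>2)"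
    and x0_in: "x0 \<in> X"
begin

sublocale M: prob_space M by (rule M_prob)
sublocale P: prob_space P by (rule P_prob)

abbreviation BX :: "'a measure" where "BX \<equiv> restrict_space borel X"
abbreviation iterate :: "nat \<Rightarrow> 'w \<Rightarrow> 'a" where "iterate t \<omega> \<equiv> sgd_iter X G \<alpha> \<xi> x0 t \<omega>"

abbreviation moreau :: "real \<Rightarrow> 'a \<Rightarrow> real" where
  "moreau \<rho>b z \<equiv> real_of_ereal (moreau_env (phi_of f X) (1 / \<rho>b) z)"

lemma X_ne: "X \<noteq> {}"
  using x0_in by auto

lemma iterate_in: "iterate t \<omega> \<in> X"
  by (rule sgd_iter_in[OF X_closed x0_in])

lemma G_measurable_on_X: "(\<lambda>(x, \<omega>). G x \<omega>) \<in> borel_measurable (BX \<Otimes>\<^sub>M P)"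
proof -
  have "(\<lambda>z. z) \<in> measurable BX (restrict_space borel U)"
    using X_sub_U by (intro measurable_restrict_space3) auto
  hence "(\<lambda>z. (fst z, snd z)) \<in> measurable (BX \<Otimes>\<^sub>M P) (restrict_space borel U \<Otimes>\<^sub>M P)"
    by (intro measurable_Pair measurable_comp[OF measurable_fst, unfolded comp_def] measurable_snd)
  from measurable_comp[OF this[simplified] G_meas] show ?thesis by (simp add: comp_def)
qed

lemma sgd_path_measurable: "sgd_path X G \<alpha> x0 t \<in> measurable (Pi\<^sub>M {..<t} (\<lambda>_. P)) BX"
proof (induction t)
  case 0
  show ?case using x0_in by (simp add: space_restrict_space)
next
  case (Suc t)
  let ?Pt = "Pi\<^sub>M {..<t} (\<lambda>_. P)" and ?Ps = "Pi\<^sub>M {..<Suc t} (\<lambda>_. P)"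
  have "(\<lambda>s. restrict s {..<t}) \<in> measurable ?Ps ?Pt"
    by (rule measurable_restrict_subset) auto
  from measurable_comp[OF this Suc.IH]
  have "(\<lambda>s. sgd_path X G \<alpha> x0 t (restrict s {..<t})) \<in> measurable ?Ps BX" by (simp add: comp_def)
  hence m1: "sgd_path X G \<alpha> x0 t \<in> measurable ?Ps BX"
    by (rule measurable_cong[THEN iffD1, rotated]) (rule sgd_path_cong, simp)
  have "(\<lambda>s. s t) \<in> measurable ?Ps P"
    by (rule measurable_component_singleton) simp
  from measurable_comp[OF measurable_Pair[OF m1 this] G_measurable_on_X]
  have m2: "(\<lambda>s. G (sgd_path X G \<alpha> x0 t s) (s t)) \<in> borel_measurable ?Ps" by (simp add: comp_def)
  have "sgd_path X G \<alpha> x0 t \<in> borel_measurable ?Ps"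
    using measurable_comp[OF m1 measurable_restrict_space1[OF measurable_ident]] by (simp add: comp_def)
  hence "(\<lambda>s. sgd_path X G \<alpha> x0 t s - \<alpha> t *\<^sub>R G (sgd_path X G \<alpha> x0 t s) (s t)) \<in> borel_measurable ?Ps"
    using m2 by measurable
  from measurable_comp[OF this closest_point_borel[OF X_convex X_closed X_ne]]
  have "sgd_path X G \<alpha> x0 (Suc t) \<in> borel_measurable ?Ps" by (simp add: comp_def)
  thus ?case
    by (intro measurable_restrict_space2) (auto intro: closest_point_in_set[OF X_closed X_ne])
qed

lemma sgd_path_measurable_UNIV: "sgd_path X G \<alpha> x0 t \<in> measurable (Pi\<^sub>M UNIV (\<lambda>_. P)) BX"
proof -
  have "(\<lambda>s. restrict s {..<t}) \<in> measurable (Pi\<^sub>M UNIV (\<lambda>_. P)) (Pi\<^sub>M {..<t} (\<lambda>_. P))"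
    by (rule measurable_restrict_subset) auto
  from measurable_comp[OF this sgd_path_measurable]
  have "(\<lambda>s. sgd_path X G \<alpha> x0 t (restrict s {..<t})) \<in> measurable (Pi\<^sub>M UNIV (\<lambda>_. P)) BX"
    by (simp add: comp_def)
  thus ?thesis by (rule measurable_cong[THEN iffD1, rotated]) (rule sgd_path_cong, simp)
qed

lemma samples_measurable: "(\<lambda>\<omega> i. \<xi> i \<omega>) \<in> measurable M (Pi\<^sub>M UNIV (\<lambda>_. P))"
  using xi_meas by (intro measurable_PiM_single') (auto simp: measurable_def)

lemma iterate_measurable: "iterate t \<in> measurable M BX"
  using measurable_comp[OF samples_measurable sgd_path_measurable_UNIV]
  unfolding sgd_iter_eq_sgd_path[of X G \<alpha> \<xi>] by (simp add: comp_def)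

lemma iterate_borel: "iterate t \<in> borel_measurable M"
  using measurable_comp[OF iterate_measurable measurable_restrict_space1[OF measurable_ident]]
  by (simp add: comp_def)

lemma iterate_sample_measurable: "(\<lambda>\<omega>. (iterate t \<omega>, \<xi> t \<omega>)) \<in> measurable M (BX \<Otimes>\<^sub>M P)"
  using iterate_measurable xi_meas by (rule measurable_Pair)

text \<open>x_t is a function of \<xi>_0, ..., \<xi>_(t-1) only, hence independent of \<xi>_t.\<close>
lemma emeasure_iterate_sample_rectangle:
  assumes A: "A \<in> sets BX" and B: "B \<in> sets P"
  shows "emeasure M ((\<lambda>\<omega>. (iterate t \<omega>, \<xi> t \<omega>)) -` (A \<times> B) \<inter> space M)
    = emeasure M (iterate t -` A \<inter> space M) * emeasure P B"
proof -
  let ?Pt = "Pi\<^sub>M {..<t} (\<lambda>_. P)" and ?Pt' = "Pi\<^sub>M {t} (\<lambda>_. P)"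
  define r1 where "r1 \<omega> = restrict (\<lambda>i. \<xi> i \<omega>) {..<t}" for \<omega>
  define r2 where "r2 \<omega> = restrict (\<lambda>i. \<xi> i \<omega>) {t}" for \<omega>
  have ind: "M.indep_var ?Pt r1 ?Pt' r2"
    unfolding r1_def r2_def by (rule M.indep_var_restrict[OF xi_indep]) auto
  define SA where "SA = sgd_path X G \<alpha> x0 t -` A \<inter> space ?Pt"
  define SB where "SB = (\<lambda>s. s t) -` B \<inter> space ?Pt'"
  have SA: "SA \<in> sets ?Pt" unfolding SA_def using sgd_path_measurable A by (rule measurable_sets)
  have SB: "SB \<in> sets ?Pt'" unfolding SB_def
    using measurable_component_singleton[of t "{t}" "\<lambda>_. P"] B by (rule measurable_sets) simp
  have "r1 \<omega> \<in> space ?Pt" and "r2 \<omega> \<in> space ?Pt'" if "\<omega> \<in> space M" for \<omega>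
    using that xi_meas unfolding r1_def r2_def by (auto simp: space_PiM measurable_def)
  moreover have "iterate t \<omega> = sgd_path X G \<alpha> x0 t (r1 \<omega>)" for \<omega>
    unfolding r1_def by (subst sgd_iter_eq_sgd_path, rule sgd_path_cong) simp
  ultimately have e1: "iterate t -` A \<inter> space M = r1 -` SA \<inter> space M"
    and e2: "\<xi> t -` B \<inter> space M = r2 -` SB \<inter> space M"
    unfolding SA_def SB_def by (auto simp: r2_def)
  hence "(\<lambda>\<omega>. (iterate t \<omega>, \<xi> t \<omega>)) -` (A \<times> B) \<inter> space M = (\<lambda>\<omega>. (r1 \<omega>, r2 \<omega>)) -` (SA \<times> SB) \<inter> space M"
    by blast
  hence "emeasure M ((\<lambda>\<omega>. (iterate t \<omega>, \<xi> t \<omega>)) -` (A \<times> B) \<inter> space M)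
      = ennreal (M.prob (r1 -` SA \<inter> space M) * M.prob (r2 -` SB \<inter> space M))"
    using M.indep_varD[OF ind SA SB] by (simp add: M.emeasure_eq_measure)
  also have "\<dots> = emeasure M (iterate t -` A \<inter> space M) * emeasure M (\<xi> t -` B \<inter> space M)"
    unfolding e1 e2 by (simp add: M.emeasure_eq_measure ennreal_mult)
  also have "emeasure M (\<xi> t -` B \<inter> space M) = emeasure P B"
    using emeasure_distr[OF xi_meas[of t] B] xi_distr[of t] by simp
  finally show ?thesis .
qed

lemma distr_iterate_sample:
  "distr M BX (iterate t) \<Otimes>\<^sub>M P = distr M (BX \<Otimes>\<^sub>M P) (\<lambda>\<omega>. (iterate t \<omega>, \<xi> t \<omega>))"
proof -
  interpret D: prob_space "distr M BX (iterate t)" by (rule M.prob_space_distr[OF iterate_measurable])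
  show ?thesis
  proof (rule pair_measure_eqI)
    fix A B assume "A \<in> sets (distr M BX (iterate t))" and B: "B \<in> sets P"
    hence A: "A \<in> sets BX" by simp
    show "emeasure (distr M BX (iterate t)) A * emeasure P B
        = emeasure (distr M (BX \<Otimes>\<^sub>M P) (\<lambda>\<omega>. (iterate t \<omega>, \<xi> t \<omega>))) (A \<times> B)"
      using A B emeasure_iterate_sample_rectangle[OF A B]
      by (simp add: emeasure_distr[OF iterate_measurable] emeasure_distr[OF iterate_sample_measurable])
  qed (unfold_locales, simp)
qed

lemma nn_integral_iterate_sample:
  assumes H: "H \<in> borel_measurable (BX \<Otimes>\<^sub>M P)"
  shows "(\<integral>\<^sup>+\<omega>. H (iterate t \<omega>, \<xi> t \<omega>) \<partial>M) = (\<integral>\<^sup>+\<omega>. (\<integral>\<^sup>+s. H (iterate t \<omega>, s) \<partial>P) \<partial>M)"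
proof -
  let ?D = "distr M BX (iterate t)"
  have sets_eq: "sets (?D \<Otimes>\<^sub>M P) = sets (BX \<Otimes>\<^sub>M P)" by simp
  have HD: "H \<in> borel_measurable (?D \<Otimes>\<^sub>M P)" using H by (simp add: measurable_cong_sets[OF sets_eq refl])
  have "(\<integral>\<^sup>+\<omega>. H (iterate t \<omega>, \<xi> t \<omega>) \<partial>M)
      = integral\<^sup>N (distr M (BX \<Otimes>\<^sub>M P) (\<lambda>\<omega>. (iterate t \<omega>, \<xi> t \<omega>))) H"
    using H by (intro nn_integral_distr[OF iterate_sample_measurable, symmetric]) simp
  also have "\<dots> = integral\<^sup>N (?D \<Otimes>\<^sub>M P) H" by (simp add: distr_iterate_sample[symmetric])
  also have "\<dots> = (\<integral>\<^sup>+a. (\<integral>\<^sup>+s. H (a, s) \<partial>P) \<partial>?D)"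
    by (rule P.nn_integral_fst[OF HD, symmetric])
  also have "\<dots> = (\<integral>\<^sup>+\<omega>. (\<integral>\<^sup>+s. H (iterate t \<omega>, s) \<partial>P) \<partial>M)"
    using P.borel_measurable_nn_integral_fst[OF H] by (intro nn_integral_distr[OF iterate_measurable]) simp
  finally show ?thesis .
qed

lemma integral_iterate_sample:
  fixes H :: "'a \<times> 'b \<Rightarrow> real"
  assumes H: "H \<in> borel_measurable (BX \<Otimes>\<^sub>M P)"
    and int: "integrable M (\<lambda>\<omega>. H (iterate t \<omega>, \<xi> t \<omega>))"
  shows "integrable M (\<lambda>\<omega>. \<integral>s. H (iterate t \<omega>, s) \<partial>P)"
    and "(\<integral>\<omega>. H (iterate t \<omega>, \<xi> t \<omega>) \<partial>M) = (\<integral>\<omega>. (\<integral>s. H (iterate t \<omega>, s) \<partial>P) \<partial>M)"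
proof -
  let ?D = "distr M BX (iterate t)"
  interpret D: prob_space ?D by (rule M.prob_space_distr[OF iterate_measurable])
  interpret DP: pair_sigma_finite ?D P by unfold_locales
  have Hm: "(\<lambda>a. \<integral>s. H (a, s) \<partial>P) \<in> borel_measurable BX"
    using P.borel_measurable_lebesgue_integral[of "\<lambda>a s. H (a, s)" BX] H by simp
  have "integrable (distr M (BX \<Otimes>\<^sub>M P) (\<lambda>\<omega>. (iterate t \<omega>, \<xi> t \<omega>))) H"
    using int by (subst integrable_distr_eq[OF iterate_sample_measurable H])
  hence iDP: "integrable (?D \<Otimes>\<^sub>M P) H" by (simp add: distr_iterate_sample[symmetric])
  have "integrable ?D (\<lambda>a. \<integral>s. H (a, s) \<partial>P)" by (rule DP.integrable_fst'[OF iDP])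
  thus "integrable M (\<lambda>\<omega>. \<integral>s. H (iterate t \<omega>, s) \<partial>P)"
    by (subst (asm) integrable_distr_eq[OF iterate_measurable Hm])
  have "(\<integral>\<omega>. H (iterate t \<omega>, \<xi> t \<omega>) \<partial>M)
      = integral\<^sup>L (distr M (BX \<Otimes>\<^sub>M P) (\<lambda>\<omega>. (iterate t \<omega>, \<xi> t \<omega>))) H"
    by (rule integral_distr[OF iterate_sample_measurable H, symmetric])
  also have "\<dots> = integral\<^sup>L (?D \<Otimes>\<^sub>M P) H" by (simp add: distr_iterate_sample[symmetric])
  also have "\<dots> = (\<integral>a. (\<integral>s. H (a, s) \<partial>P) \<partial>?D)" by (rule DP.integral_fst'[OF iDP, symmetric])
  also have "\<dots> = (\<integral>\<omega>. (\<integral>s. H (iterate t \<omega>, s) \<partial>P) \<partial>M)" by (rule integral_distr[OF iterate_measurable Hm])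
  finally show "(\<integral>\<omega>. H (iterate t \<omega>, \<xi> t \<omega>) \<partial>M) = (\<integral>\<omega>. (\<integral>s. H (iterate t \<omega>, s) \<partial>P) \<partial>M)" .
qed

lemma G_second_moment:
  assumes a: "a \<in> X"
  shows "integrable P (\<lambda>s. (norm (G a s))\<^sup>2)" and "(\<integral>s. (norm (G a s))\<^sup>2 \<partial>P) \<le> L\<^sup>2"
proof -
  have m: "(\<lambda>s. (norm (G a s))\<^sup>2) \<in> borel_measurable P"
    using G_integrable[of a] a X_sub_U by auto
  have b: "(\<integral>\<^sup>+s. ennreal ((norm (G a s))\<^sup>2) \<partial>P) \<le> ennreal (L\<^sup>2)" by (rule G_bound[OF a])
  show "integrable P (\<lambda>s. (norm (G a s))\<^sup>2)"
    by (rule integrableI_bounded[OF m]) (use b le_less_trans in fastforce)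
  have "(\<integral>s. (norm (G a s))\<^sup>2 \<partial>P) = enn2real (\<integral>\<^sup>+s. ennreal ((norm (G a s))\<^sup>2) \<partial>P)"
    by (rule integral_eq_nn_integral[OF m]) auto
  also have "\<dots> \<le> enn2real (ennreal (L\<^sup>2))" using b by (intro enn2real_mono) auto
  finally show "(\<integral>s. (norm (G a s))\<^sup>2 \<partial>P) \<le> L\<^sup>2" by simp
qed

lemma integrable_G_iterate_square: "integrable M (\<lambda>\<omega>. (norm (G (iterate t \<omega>) (\<xi> t \<omega>)))\<^sup>2)"
proof (rule integrableI_bounded)
  have Gm: "(\<lambda>\<omega>. G (iterate t \<omega>) (\<xi> t \<omega>)) \<in> borel_measurable M"
    using measurable_comp[OF iterate_sample_measurable G_measurable_on_X] by (simp add: comp_def)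
  thus "(\<lambda>\<omega>. (norm (G (iterate t \<omega>) (\<xi> t \<omega>)))\<^sup>2) \<in> borel_measurable M" by measurable
  have H: "(\<lambda>z. ennreal ((norm (G (fst z) (snd z)))\<^sup>2)) \<in> borel_measurable (BX \<Otimes>\<^sub>M P)"
    using G_measurable_on_X by (simp add: case_prod_beta' measurable_compose[where f="\<lambda>z. G (fst z) (snd z)"])
  have "(\<integral>\<^sup>+\<omega>. ennreal ((norm (G (iterate t \<omega>) (\<xi> t \<omega>)))\<^sup>2) \<partial>M)
      = (\<integral>\<^sup>+\<omega>. (\<integral>\<^sup>+s. ennreal ((norm (G (iterate t \<omega>) s))\<^sup>2) \<partial>P) \<partial>M)"
    using nn_integral_iterate_sample[OF H, of t] by simp
  also have "\<dots> \<le> (\<integral>\<^sup>+\<omega>. ennreal (L\<^sup>2) \<partial>M)"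
    by (intro nn_integral_mono G_bound iterate_in)
  also have "\<dots> = ennreal (L\<^sup>2)" by (simp add: M.emeasure_space_1)
  finally show "(\<integral>\<^sup>+\<omega>. ennreal (norm ((norm (G (iterate t \<omega>) (\<xi> t \<omega>)))\<^sup>2)) \<partial>M) < \<infinity>"
    using le_less_trans by fastforce
qed

lemma iterate_Suc:
  "iterate (Suc t) \<omega> = closest_point X (iterate t \<omega> - \<alpha> t *\<^sub>R G (iterate t \<omega>) (\<xi> t \<omega>))"
  by simp

lemma integrable_iterate_dist_square: "integrable M (\<lambda>\<omega>. (norm (iterate t \<omega> - x0))\<^sup>2)"
proof (induction t)
  case (Suc t)
  show ?case
  proof (rule Bochner_Integration.integrable_bound)
    show "integrable M (\<lambda>\<omega>. 2 * (norm (iterate t \<omega> - x0))\<^sup>2 + 2 * (\<alpha> t)\<^sup>2 * (norm (G (iterate t \<omega>) (\<xi> t \<omega>)))\<^sup>2)"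
      using Suc.IH integrable_G_iterate_square by simp
    show "(\<lambda>\<omega>. (norm (iterate (Suc t) \<omega> - x0))\<^sup>2) \<in> borel_measurable M"
      using iterate_borel[of "Suc t"] by measurable
    show "AE \<omega> in M. norm ((norm (iterate (Suc t) \<omega> - x0))\<^sup>2)
        \<le> norm (2 * (norm (iterate t \<omega> - x0))\<^sup>2 + 2 * (\<alpha> t)\<^sup>2 * (norm (G (iterate t \<omega>) (\<xi> t \<omega>)))\<^sup>2)"
      using closest_point_step_dist_square[OF X_convex X_closed x0_in]
      by (auto simp del: sgd_iter.simps simp: iterate_Suc)
  qed
qed simp

lemma integrable_quadratic_growth:
  assumes k: "k \<in> borel_measurable borel" and B: "B \<ge> 0"
    and growth: "\<And>y. \<bar>k y\<bar> \<le> A + B * (norm (y - x0))\<^sup>2"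
  shows "integrable M (\<lambda>\<omega>. k (iterate t \<omega>))"
proof (rule Bochner_Integration.integrable_bound)
  show "integrable M (\<lambda>\<omega>. A + B * (norm (iterate t \<omega> - x0))\<^sup>2)"
    using integrable_iterate_dist_square by simp
  show "(\<lambda>\<omega>. k (iterate t \<omega>)) \<in> borel_measurable M"
    using measurable_comp[OF iterate_borel k] by (simp add: comp_def)
  show "AE \<omega> in M. norm (k (iterate t \<omega>)) \<le> norm (A + B * (norm (iterate t \<omega> - x0))\<^sup>2)"
    using growth by (auto intro: order_trans[OF _ abs_ge_self])
qed

end

section \<open>Expected descent of the Moreau envelope\<close>

locale proj_sgd_moreau = proj_sgd +
  fixes \<rho>b :: real
  assumes rhob_gt: "\<rho>b > \<rho>"
begin

sublocale m: weakly_convex_prox \<rho> \<rho>b f X x0 "\<integral>\<omega>. G x0 \<omega> \<partial>P"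
  by unfold_locales (use rho_pos rhob_gt X_closed X_convex f_wc x0_in X_sub_U G_subgrad in auto)

lemma env_borel: "m.env \<in> borel_measurable borel"
  by (rule borel_measurable_continuous_onI[OF m.continuous_on_env])

lemma prox_borel: "m.prox \<in> borel_measurable borel"
  by (rule borel_measurable_continuous_onI[OF m.continuous_on_prox])

lemma integrable_env_iterate: "integrable M (\<lambda>\<omega>. m.env (iterate t \<omega>))"
proof -
  obtain A B where "\<And>x. \<bar>m.env x\<bar> \<le> A + B * (norm (x - x0))\<^sup>2" "B \<ge> 0"
    using m.env_quadratic_growth by blast
  thus ?thesis by (intro integrable_quadratic_growth[OF env_borel])
qed

lemma integrable_grad_iterate:
  "integrable M (\<lambda>\<omega>. (norm (\<rho>b *\<^sub>R (iterate t \<omega> - m.prox (iterate t \<omega>))))\<^sup>2)"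
proof -
  obtain A B where "\<And>x. (norm (\<rho>b *\<^sub>R (x - m.prox x)))\<^sup>2 \<le> A + B * (norm (x - x0))\<^sup>2" "B \<ge> 0"
    using m.norm_grad_env_quadratic_growth by blast
  moreover have "(\<lambda>x. (norm (\<rho>b *\<^sub>R (x - m.prox x)))\<^sup>2) \<in> borel_measurable borel"
    using prox_borel by measurable
  ultimately show ?thesis by (intro integrable_quadratic_growth[where B = B and A = A]) auto
qed

lemma integrable_env_projected_step:
  assumes a: "a \<in> X"
  shows "integrable P (\<lambda>s. m.env (closest_point X (a - c *\<^sub>R G a s)))"
proof -
  have Gi: "integrable P (G a)" using G_integrable a X_sub_U by auto
  obtain A B where growth: "\<And>x. \<bar>m.env x\<bar> \<le> A + B * (norm (x - x0))\<^sup>2" and B: "B \<ge> 0"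
    using m.env_quadratic_growth by blast
  have "(\<lambda>s. a - c *\<^sub>R G a s) \<in> borel_measurable P" using Gi by measurable
  from measurable_comp[OF measurable_comp[OF this closest_point_borel[OF X_convex X_closed X_ne]] env_borel]
  have lm: "(\<lambda>s. m.env (closest_point X (a - c *\<^sub>R G a s))) \<in> borel_measurable P"
    by (simp add: comp_def)
  show ?thesis
  proof (rule Bochner_Integration.integrable_bound[OF _ lm])
    show "integrable P (\<lambda>s. A + B * (2 * (norm (a - x0))\<^sup>2 + 2 * c\<^sup>2 * (norm (G a s))\<^sup>2))"
      using G_second_moment(1)[OF a] by simp
    have "\<bar>m.env (closest_point X (a - c *\<^sub>R G a s))\<bar>
        \<le> A + B * (2 * (norm (a - x0))\<^sup>2 + 2 * c\<^sup>2 * (norm (G a s))\<^sup>2)" for s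
      using growth[of "closest_point X (a - c *\<^sub>R G a s)"] B
        closest_point_step_dist_square[OF X_convex X_closed x0_in, of a c "G a s"]
      by (smt (verit) mult_left_mono)
    thus "AE s in P. norm (m.env (closest_point X (a - c *\<^sub>R G a s)))
        \<le> norm (A + B * (2 * (norm (a - x0))\<^sup>2 + 2 * c\<^sup>2 * (norm (G a s))\<^sup>2))"
      by (auto intro: order_trans[OF _ abs_ge_self])
  qed
qed

text \<open>By (A2) the mean step is a subgradient at a, so subgradient_inner_prox_ge bounds the
  first-order term of env_projected_step.\<close>
lemma expected_env_step:
  assumes a: "a \<in> X" and c: "c \<ge> 0"
  shows "(\<integral>s. m.env (closest_point X (a - c *\<^sub>R G a s)) \<partial>P)
    \<le> m.env a - c * m.\<mu> / \<rho>b * (norm (\<rho>b *\<^sub>R (a - m.prox a)))\<^sup>2 + c\<^sup>2 * \<rho>b * L\<^sup>2 / 2"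
proof -
  have aU: "a \<in> U" using a X_sub_U by auto
  have Gi: "integrable P (G a)" by (rule G_integrable[OF aU])
  note Gsq = G_second_moment[OF a]
  note li = integrable_env_projected_step[OF a, of c]
  define d where "d = a - m.prox a"
  have ri: "integrable P (\<lambda>s. m.env a - \<rho>b * c * inner (G a s) d + \<rho>b * c\<^sup>2 / 2 * (norm (G a s))\<^sup>2)"
    using Gi Gsq(1) by (intro Bochner_Integration.integrable_add Bochner_Integration.integrable_diff
        Bochner_Integration.integrable_mult_right integrable_inner_left) auto
  have "(\<integral>s. m.env (closest_point X (a - c *\<^sub>R G a s)) \<partial>P)
        \<le> (\<integral>s. m.env a - \<rho>b * c * inner (G a s) d + \<rho>b * c\<^sup>2 / 2 * (norm (G a s))\<^sup>2 \<partial>P)"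
    by (rule integral_mono[OF li ri]) (use m.env_projected_step in \<open>simp add: d_def\<close>)
  also have "\<dots> = m.env a - \<rho>b * c * inner (\<integral>s. G a s \<partial>P) d + \<rho>b * c\<^sup>2 / 2 * (\<integral>s. (norm (G a s))\<^sup>2 \<partial>P)"
    using Gi Gsq(1) by (simp add: Bochner_Integration.integral_add Bochner_Integration.integral_diff
        integrable_inner_left integral_inner_left P.prob_space)
  also have "\<dots> \<le> m.env a - \<rho>b * c * (m.\<mu> * (norm d)\<^sup>2) + \<rho>b * c\<^sup>2 / 2 * L\<^sup>2"
  proof -
    have "inner (\<integral>s. G a s \<partial>P) d \<ge> m.\<mu> * (norm d)\<^sup>2"
      unfolding d_def by (rule m.subgradient_inner_prox_ge[OF a G_subgrad[OF aU]])
    hence "\<rho>b * c * inner (\<integral>s. G a s \<partial>P) d \<ge> \<rho>b * c * (m.\<mu> * (norm d)\<^sup>2)"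
      using c m.rhob_pos by (intro mult_left_mono) auto
    moreover have "\<rho>b * c\<^sup>2 / 2 * (\<integral>s. (norm (G a s))\<^sup>2 \<partial>P) \<le> \<rho>b * c\<^sup>2 / 2 * L\<^sup>2"
      using Gsq(2) m.rhob_pos by (intro mult_left_mono) auto
    ultimately show ?thesis by linarith
  qed
  also have "\<rho>b * c * (m.\<mu> * (norm d)\<^sup>2) = c * m.\<mu> / \<rho>b * (norm (\<rho>b *\<^sub>R d))\<^sup>2"
    using m.rhob_pos by (simp add: power_mult_distrib power2_eq_square field_simps)
  finally show ?thesis by (simp add: d_def algebra_simps)
qed

lemma expected_env_descent:
  assumes c: "\<alpha> t \<ge> 0"
  shows "(\<integral>\<omega>. m.env (iterate (Suc t) \<omega>) \<partial>M) \<le> (\<integral>\<omega>. m.env (iterate t \<omega>) \<partial>M)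
     - \<alpha> t * m.\<mu> / \<rho>b * (\<integral>\<omega>. (norm (\<rho>b *\<^sub>R (iterate t \<omega> - m.prox (iterate t \<omega>))))\<^sup>2 \<partial>M)
     + (\<alpha> t)\<^sup>2 * \<rho>b * L\<^sup>2 / 2"
proof -
  define H where "H z = m.env (closest_point X (fst z - \<alpha> t *\<^sub>R G (fst z) (snd z)))" for z
  have "(\<lambda>z. G (fst z) (snd z)) \<in> borel_measurable (BX \<Otimes>\<^sub>M P)"
    using G_measurable_on_X by (simp add: case_prod_beta')
  moreover have "(\<lambda>z. fst z) \<in> borel_measurable (BX \<Otimes>\<^sub>M P)"
    using measurable_comp[OF measurable_fst measurable_restrict_space1[OF measurable_ident]]
    by (simp add: comp_def)
  ultimately have "(\<lambda>z. fst z - \<alpha> t *\<^sub>R G (fst z) (snd z)) \<in> borel_measurable (BX \<Otimes>\<^sub>M P)"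
    by measurable
  from measurable_comp[OF measurable_comp[OF this closest_point_borel[OF X_convex X_closed X_ne]] env_borel]
  have Hm: "H \<in> borel_measurable (BX \<Otimes>\<^sub>M P)" unfolding H_def[abs_def] by (simp add: comp_def)
  have eq: "m.env (iterate (Suc t) \<omega>) = H (iterate t \<omega>, \<xi> t \<omega>)" for \<omega> by (simp add: H_def)
  have "integrable M (\<lambda>\<omega>. H (iterate t \<omega>, \<xi> t \<omega>))"
    using integrable_env_iterate[of "Suc t"] unfolding eq .
  note transfer = integral_iterate_sample[OF Hm this]
  have ri: "integrable M (\<lambda>\<omega>. m.env (iterate t \<omega>)
      - \<alpha> t * m.\<mu> / \<rho>b * (norm (\<rho>b *\<^sub>R (iterate t \<omega> - m.prox (iterate t \<omega>))))\<^sup>2 + (\<alpha> t)\<^sup>2 * \<rho>b * L\<^sup>2 / 2)"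
    using integrable_env_iterate integrable_grad_iterate by simp
  have "(\<integral>\<omega>. m.env (iterate (Suc t) \<omega>) \<partial>M) = (\<integral>\<omega>. (\<integral>s. H (iterate t \<omega>, s) \<partial>P) \<partial>M)"
    unfolding eq by (rule transfer(2))
  also have "\<dots> \<le> (\<integral>\<omega>. m.env (iterate t \<omega>)
      - \<alpha> t * m.\<mu> / \<rho>b * (norm (\<rho>b *\<^sub>R (iterate t \<omega> - m.prox (iterate t \<omega>))))\<^sup>2 + (\<alpha> t)\<^sup>2 * \<rho>b * L\<^sup>2 / 2 \<partial>M)"
    using expected_env_step[OF iterate_in c] by (intro integral_mono[OF transfer(1) ri]) (simp add: H_def)
  also have "\<dots> = (\<integral>\<omega>. m.env (iterate t \<omega>) \<partial>M)
      - \<alpha> t * m.\<mu> / \<rho>b * (\<integral>\<omega>. (norm (\<rho>b *\<^sub>R (iterate t \<omega> - m.prox (iterate t \<omega>))))\<^sup>2 \<partial>M)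
      + (\<alpha> t)\<^sup>2 * \<rho>b * L\<^sup>2 / 2"
    using integrable_env_iterate integrable_grad_iterate
    by (simp add: Bochner_Integration.integral_add Bochner_Integration.integral_diff M.prob_space)
  finally show ?thesis .
qed

end

section \<open>The randomly chosen output iterate\<close>

lemma sigma_sets_comp_subset_vimage:
  assumes g: "g \<in> measurable N K" and h: "h \<in> \<Omega> \<rightarrow> space N"
  shows "sigma_sets \<Omega> {(\<lambda>\<omega>. g (h \<omega>)) -` A \<inter> \<Omega> |A. A \<in> sets K} \<subseteq> sets (vimage_algebra \<Omega> h N)"
  unfolding sets_vimage_algebra
proof (rule sigma_sets_mono', safe)
  fix A assume "A \<in> sets K"
  hence "g -` A \<inter> space N \<in> sets N" by (rule measurable_sets[OF g])
  moreover have "(\<lambda>\<omega>. g (h \<omega>)) -` A \<inter> \<Omega> = h -` (g -` A \<inter> space N) \<inter> \<Omega>" using h by auto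
  ultimately show "\<exists>B. (\<lambda>\<omega>. g (h \<omega>)) -` A \<inter> \<Omega> = h -` B \<inter> \<Omega> \<and> B \<in> sets N"
    by (intro exI conjI)
qed

locale proj_sgd_output = proj_sgd +
  fixes T :: nat and tstar
  assumes alpha_nonneg: "\<And>t. t \<le> T \<Longrightarrow> \<alpha> t \<ge> 0"
    and alpha_sum_pos: "(\<Sum>t\<le>T. \<alpha> t) > 0"
    and tstar_meas: "tstar \<in> measurable M (count_space UNIV)"
    and tstar_distr: "\<And>t. t \<le> T \<Longrightarrow>
        measure M {\<omega> \<in> space M. tstar \<omega> = t} = \<alpha> t / (\<Sum>i\<le>T. \<alpha> i)"
    and tstar_indep: "prob_space.indep_set M
        (sets (vimage_algebra (space M) tstar (count_space UNIV)))
        (sets (vimage_algebra (space M) (\<lambda>\<omega> i. \<xi> i \<omega>) (Pi\<^sub>M UNIV (\<lambda>_. P))))"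
begin

lemma indicator_tstar_borel: "(\<lambda>\<omega>. indicator {t} (tstar \<omega>) :: real) \<in> borel_measurable M"
  using measurable_comp[OF tstar_meas, of "\<lambda>n. indicator {t} n :: real" borel] by (simp add: comp_def)

lemma integrable_indicator_tstar: "integrable M (\<lambda>\<omega>. indicator {t} (tstar \<omega>) :: real)"
  by (auto intro!: M.integrable_const_bound[where B=1] indicator_tstar_borel)

lemma integral_indicator_tstar:
  "(\<integral>\<omega>. (indicator {t} (tstar \<omega>) :: real) \<partial>M) = measure M {\<omega> \<in> space M. tstar \<omega> = t}"
proof -
  have "(\<integral>\<omega>. (indicator {t} (tstar \<omega>) :: real) \<partial>M) = (\<integral>\<omega>. indicator {\<omega> \<in> space M. tstar \<omega> = t} \<omega> \<partial>M)"
    by (rule Bochner_Integration.integral_cong) (auto simp: indicator_def)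
  also have "\<dots> = measure M {\<omega> \<in> space M. tstar \<omega> = t}"
    by (simp add: Int_absorb2)
  finally show ?thesis .
qed

lemma tstar_le_T_AE: "AE \<omega> in M. tstar \<omega> \<le> T"
proof -
  have "{\<omega> \<in> space M. tstar \<omega> \<le> T} \<in> sets M"
    using tstar_meas by measurable
  hence "M.prob {\<omega> \<in> space M. tstar \<omega> \<le> T} = (\<integral>\<omega>. indicator {\<omega> \<in> space M. tstar \<omega> \<le> T} \<omega> \<partial>M)"
    by (simp add: Int_absorb2)
  also have "\<dots> = (\<integral>\<omega>. (\<Sum>t\<le>T. (indicator {t} (tstar \<omega>) :: real)) \<partial>M)"
    by (rule Bochner_Integration.integral_cong) (auto simp: indicator_def)
  also have "\<dots> = (\<Sum>t\<le>T. \<alpha> t / (\<Sum>i\<le>T. \<alpha> i))"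
    using integrable_indicator_tstar
    by (simp add: Bochner_Integration.integral_sum integral_indicator_tstar tstar_distr)
  also have "\<dots> = 1" using alpha_sum_pos by (simp add: sum_divide_distrib[symmetric])
  finally show ?thesis by (rule M.AE_prob_1[THEN AE_mp]) auto
qed

lemma indep_tstar_iterate:
  assumes k: "k \<in> borel_measurable borel"
  shows "M.indep_var borel (\<lambda>\<omega>. indicator {t} (tstar \<omega>) :: real) borel (\<lambda>\<omega>. k (iterate t \<omega>))"
proof -
  define \<Xi> where "\<Xi> \<omega> = (\<lambda>i. \<xi> i \<omega>)" for \<omega>
  have "(\<lambda>s. k (sgd_path X G \<alpha> x0 t s)) \<in> borel_measurable (Pi\<^sub>M UNIV (\<lambda>_. P))"
    using measurable_comp[OF measurable_comp[OF sgd_path_measurable_UNIV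
          measurable_restrict_space1[OF measurable_ident]] k]
    by (simp add: comp_def)
  from sigma_sets_comp_subset_vimage[OF this, of \<Xi> "space M"]
  have s2: "sigma_sets (space M) {(\<lambda>\<omega>. k (iterate t \<omega>)) -` A \<inter> space M |A. A \<in> sets borel}
      \<subseteq> sets (vimage_algebra (space M) \<Xi> (Pi\<^sub>M UNIV (\<lambda>_. P)))"
    using measurable_space[OF samples_measurable] by (simp add: \<Xi>_def sgd_iter_eq_sgd_path[of X G \<alpha> \<xi>])
  have s1: "sigma_sets (space M) {(\<lambda>\<omega>. indicator {t} (tstar \<omega>) :: real) -` A \<inter> space M |A. A \<in> sets borel}
      \<subseteq> sets (vimage_algebra (space M) tstar (count_space UNIV))"
    by (rule sigma_sets_comp_subset_vimage) auto
  have ind: "M.indep_sets (case_bool (sets (vimage_algebra (space M) tstar (count_space UNIV)))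
      (sets (vimage_algebra (space M) \<Xi> (Pi\<^sub>M UNIV (\<lambda>_. P))))) UNIV"
    using tstar_indep unfolding M.indep_set_def \<Xi>_def .
  have "M.random_variable borel (\<lambda>\<omega>. k (iterate t \<omega>))"
    using measurable_comp[OF iterate_borel k] by (simp add: comp_def)
  moreover have "M.indep_set
      (sigma_sets (space M) {(\<lambda>\<omega>. indicator {t} (tstar \<omega>) :: real) -` A \<inter> space M |A. A \<in> sets borel})
      (sigma_sets (space M) {(\<lambda>\<omega>. k (iterate t \<omega>)) -` A \<inter> space M |A. A \<in> sets borel})"
    unfolding M.indep_set_def
    by (rule M.indep_sets_mono_sets[OF ind]) (use s1 s2 in \<open>auto split: bool.split\<close>)
  ultimately show ?thesis
    unfolding M.indep_var_eq using indicator_tstar_borel by simp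
qed

lemma integral_at_tstar:
  assumes k: "k \<in> borel_measurable borel" and ki: "\<And>t. integrable M (\<lambda>\<omega>. k (iterate t \<omega>))"
  shows "(\<integral>\<omega>. k (iterate (tstar \<omega>) \<omega>) \<partial>M)
    = (\<Sum>t\<le>T. \<alpha> t / (\<Sum>i\<le>T. \<alpha> i) * (\<integral>\<omega>. k (iterate t \<omega>) \<partial>M))"
proof -
  have xk: "(\<lambda>\<omega>. k (iterate t \<omega>)) \<in> borel_measurable M" for t
    using measurable_comp[OF iterate_borel k] by (simp add: comp_def)
  have "(\<integral>\<omega>. k (iterate (tstar \<omega>) \<omega>) \<partial>M) = (\<integral>\<omega>. (\<Sum>t\<le>T. indicator {t} (tstar \<omega>) * k (iterate t \<omega>)) \<partial>M)"
  proof (rule integral_cong_AE)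
    show "(\<lambda>\<omega>. k (iterate (tstar \<omega>) \<omega>)) \<in> borel_measurable M"
      by (rule measurable_compose_countable[OF xk tstar_meas])
    show "(\<lambda>\<omega>. \<Sum>t\<le>T. indicator {t} (tstar \<omega>) * k (iterate t \<omega>)) \<in> borel_measurable M"
      using indicator_tstar_borel xk by measurable
    show "AE \<omega> in M. k (iterate (tstar \<omega>) \<omega>) = (\<Sum>t\<le>T. indicator {t} (tstar \<omega>) * k (iterate t \<omega>))"
      using tstar_le_T_AE by eventually_elim (simp add: indicator_def if_distrib cong: if_cong)
  qed
  also have "\<dots> = (\<Sum>t\<le>T. (\<integral>\<omega>. indicator {t} (tstar \<omega>) * k (iterate t \<omega>) \<partial>M))"
    using M.indep_var_integrable[OF indep_tstar_iterate[OF k] integrable_indicator_tstar ki]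
    by (intro Bochner_Integration.integral_sum)
  also have "\<dots> = (\<Sum>t\<le>T. \<alpha> t / (\<Sum>i\<le>T. \<alpha> i) * (\<integral>\<omega>. k (iterate t \<omega>) \<partial>M))"
    using M.indep_var_lebesgue_integral[OF indep_tstar_iterate[OF k] integrable_indicator_tstar ki]
    by (intro sum.cong) (simp_all add: integral_indicator_tstar tstar_distr)
  finally show ?thesis .
qed

end

locale proj_sgd_output_moreau = proj_sgd_output + proj_sgd_moreau
begin

definition expected_env :: "nat \<Rightarrow> real" where
  "expected_env t = (\<integral>\<omega>. m.env (iterate t \<omega>) \<partial>M)"

definition expected_grad_sq :: "nat \<Rightarrow> real" where
  "expected_grad_sq t = (\<integral>\<omega>. (norm (\<rho>b *\<^sub>R (iterate t \<omega> - m.prox (iterate t \<omega>))))\<^sup>2 \<partial>M)"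

lemma moreau_eq_env: "moreau \<rho>b x = m.env x"
  by (simp add: m.moreau_env_eq_env)

lemma moreau_descent:
  assumes "t \<le> T"
  shows "(\<integral>\<omega>. moreau \<rho>b (iterate (Suc t) \<omega>) \<partial>M)
    \<le> (\<integral>\<omega>. moreau \<rho>b (iterate t \<omega>) \<partial>M)
      - \<alpha> t * (\<rho>b - \<rho>) / \<rho>b * (\<integral>\<omega>. (norm (grad (moreau \<rho>b) (iterate t \<omega>)))\<^sup>2 \<partial>M)
      + (\<alpha> t)\<^sup>2 * \<rho>b * L\<^sup>2 / 2"
  using expected_env_descent[OF alpha_nonneg[OF assms]]
  by (simp add: moreau_eq_env grad_eqI[OF m.env_has_gderiv] m.\<mu>_def)

lemma telescoped_descent:
  "n \<le> Suc T \<Longrightarrow> (\<Sum>t<n. \<alpha> t * m.\<mu> / \<rho>b * expected_grad_sq t)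
    \<le> expected_env 0 - expected_env n + \<rho>b * L\<^sup>2 / 2 * (\<Sum>t<n. (\<alpha> t)\<^sup>2)"
proof (induction n)
  case (Suc n)
  have "expected_env (Suc n) \<le> expected_env n - \<alpha> n * m.\<mu> / \<rho>b * expected_grad_sq n + (\<alpha> n)\<^sup>2 * \<rho>b * L\<^sup>2 / 2"
    using expected_env_descent[OF alpha_nonneg] Suc.prems
    unfolding expected_env_def expected_grad_sq_def by simp
  thus ?case using Suc by (simp add: algebra_simps)
qed simp

lemma expected_env_ge:
  assumes "(INF y. phi_of f X y) = ereal c"
  shows "expected_env t \<ge> c"
proof -
  have "c \<le> m.env z" for z using m.inf_phi_le_env[of z] assms by simp
  hence "(\<integral>\<omega>. c \<partial>M) \<le> expected_env t"
    unfolding expected_env_def by (intro integral_mono integrable_env_iterate) auto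
  thus ?thesis by (simp add: M.prob_space)
qed

lemma expected_grad_sq_at_tstar:
  "(\<integral>\<omega>. (norm (\<rho>b *\<^sub>R (iterate (tstar \<omega>) \<omega> - m.prox (iterate (tstar \<omega>) \<omega>))))\<^sup>2 \<partial>M)
    = (\<Sum>t\<le>T. \<alpha> t / (\<Sum>i\<le>T. \<alpha> i) * expected_grad_sq t)"
proof -
  have "(\<lambda>z. (norm (\<rho>b *\<^sub>R (z - m.prox z)))\<^sup>2) \<in> borel_measurable borel"
    using prox_borel by measurable
  thus ?thesis unfolding expected_grad_sq_def
    by (rule integral_at_tstar) (use integrable_grad_iterate in auto)
qed

lemma weighted_grad_sq_le:
  assumes "(INF y. phi_of f X y) = ereal c"
  shows "(\<Sum>t\<le>T. \<alpha> t / (\<Sum>i\<le>T. \<alpha> i) * expected_grad_sq t)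
    \<le> \<rho>b / m.\<mu> * ((m.env x0 - c + \<rho>b * L\<^sup>2 / 2 * (\<Sum>t\<le>T. (\<alpha> t)\<^sup>2)) / (\<Sum>t\<le>T. \<alpha> t))"
proof -
  define S where "S = (\<Sum>t\<le>T. \<alpha> t)"
  have S: "S > 0" using alpha_sum_pos unfolding S_def .
  have "(\<Sum>t\<le>T. \<alpha> t * m.\<mu> / \<rho>b * expected_grad_sq t)
      \<le> m.env x0 - c + \<rho>b * L\<^sup>2 / 2 * (\<Sum>t\<le>T. (\<alpha> t)\<^sup>2)"
    using telescoped_descent[of "Suc T"] expected_env_ge[OF assms, of "Suc T"]
    by (simp add: lessThan_Suc_atMost expected_env_def M.prob_space)
  hence "\<rho>b / m.\<mu> / S * (\<Sum>t\<le>T. \<alpha> t * m.\<mu> / \<rho>b * expected_grad_sq t)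
      \<le> \<rho>b / m.\<mu> / S * (m.env x0 - c + \<rho>b * L\<^sup>2 / 2 * (\<Sum>t\<le>T. (\<alpha> t)\<^sup>2))"
    using S m.mu_pos m.rhob_pos by (intro mult_left_mono) auto
  moreover have "\<rho>b / m.\<mu> / S * (\<Sum>t\<le>T. \<alpha> t * m.\<mu> / \<rho>b * expected_grad_sq t)
      = (\<Sum>t\<le>T. \<alpha> t / S * expected_grad_sq t)"
    using S m.mu_pos m.rhob_pos by (simp add: sum_distrib_left field_simps)
  ultimately show ?thesis unfolding S_def by simp
qed

lemma moreau_grad_bound:
  "ereal (\<integral>\<omega>. (norm (grad (moreau \<rho>b) (iterate (tstar \<omega>) \<omega>)))\<^sup>2 \<partial>M)
    \<le> ereal (\<rho>b / (\<rho>b - \<rho>)) *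
       ((moreau_env (phi_of f X) (1 / \<rho>b) x0 - (INF y. phi_of f X y)
         + ereal (\<rho>b * L\<^sup>2 / 2 * (\<Sum>t\<le>T. (\<alpha> t)\<^sup>2))) / ereal (\<Sum>t\<le>T. \<alpha> t))"
proof (cases "(INF y. phi_of f X y)")
  case (real c)
  thus ?thesis
    using weighted_grad_sq_le[OF real] alpha_sum_pos
    unfolding m.grad_moreau_env expected_grad_sq_at_tstar
    by (simp add: m.moreau_env_eq_env m.\<mu>_def)
next
  case PInf
  have "(INF y. phi_of f X y) \<le> phi_of f X x0" by (rule INF_lower) simp
  thus ?thesis using PInf x0_in by (simp add: phi_of_def indic_fun_def)
next
  case MInf
  thus ?thesis using alpha_sum_pos rhob_gt rho_pos by (simp add: m.moreau_env_eq_env)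
qed

end

context proj_sgd_output begin

lemma moreau_descent_gt:
  "\<rho>b > \<rho> \<Longrightarrow> t \<le> T \<Longrightarrow> (\<integral>\<omega>. moreau \<rho>b (iterate (Suc t) \<omega>) \<partial>M)
    \<le> (\<integral>\<omega>. moreau \<rho>b (iterate t \<omega>) \<partial>M)
      - \<alpha> t * (\<rho>b - \<rho>) / \<rho>b * (\<integral>\<omega>. (norm (grad (moreau \<rho>b) (iterate t \<omega>)))\<^sup>2 \<partial>M)
      + (\<alpha> t)\<^sup>2 * \<rho>b * L\<^sup>2 / 2"
  by (rule proj_sgd_output_moreau.moreau_descent, unfold_locales)

lemma moreau_grad_bound_gt:
  "\<rho>b > \<rho> \<Longrightarrow> ereal (\<integral>\<omega>. (norm (grad (moreau \<rho>b) (iterate (tstar \<omega>) \<omega>)))\<^sup>2 \<partial>M)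
    \<le> ereal (\<rho>b / (\<rho>b - \<rho>)) *
       ((moreau_env (phi_of f X) (1 / \<rho>b) x0 - (INF y. phi_of f X y)
         + ereal (\<rho>b * L\<^sup>2 / 2 * (\<Sum>t\<le>T. (\<alpha> t)\<^sup>2))) / ereal (\<Sum>t\<le>T. \<alpha> t))"
  by (rule proj_sgd_output_moreau.moreau_grad_bound, unfold_locales)

lemma moreau_grad_bound_constant_step:
  assumes step: "\<And>t. t \<le> T \<Longrightarrow> \<alpha> t = \<gamma> / sqrt (real T + 1)"
  shows "ereal (\<integral>\<omega>. (norm (grad (moreau (2 * \<rho>)) (iterate (tstar \<omega>) \<omega>)))\<^sup>2 \<partial>M)
    \<le> ereal 2 * ((moreau_env (phi_of f X) (1 / (2 * \<rho>)) x0 - (INF y. phi_of f X y)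
         + ereal (\<rho> * L\<^sup>2 * \<gamma>\<^sup>2)) / ereal (\<gamma> * sqrt (real T + 1)))"
proof -
  have sq: "sqrt (real T + 1) * sqrt (real T + 1) = real T + 1" by (simp add: real_sqrt_mult_self)
  have "2 * \<rho> / (2 * \<rho> - \<rho>) = 2" using rho_pos by simp
  moreover have "(\<Sum>t\<le>T. (\<alpha> t)\<^sup>2) = \<gamma>\<^sup>2"
    using step by (simp add: power_divide add.commute)
  moreover have "(\<Sum>t\<le>T. \<alpha> t) = \<gamma> * sqrt (real T + 1)"
  proof -
    have "(\<Sum>t\<le>T. \<alpha> t) = (real T + 1) * \<gamma> / sqrt (real T + 1)" using step by simp
    also have "\<dots> = \<gamma> * sqrt (real T + 1)" by (simp add: sq[symmetric] field_simps)
    finally show ?thesis .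
  qed
  ultimately show ?thesis using moreau_grad_bound_gt[of "2 * \<rho>"] rho_pos by simp
qed

end

theorem theorem3p1:
  fixes \<rho> L :: real
    and X U :: "'a::euclidean_space set"
    and f :: "'a \<Rightarrow> real"
    and P :: "'b measure"
    and M :: "'w measure"
    and \<xi> :: "nat \<Rightarrow> 'w \<Rightarrow> 'b"
    and G :: "'a \<Rightarrow> 'b \<Rightarrow> 'a"
    and T :: nat
    and x0 :: 'a
    and \<alpha> :: "nat \<Rightarrow> real"
    and tstar :: "'w \<Rightarrow> nat"
  assumes rho_pos: "\<rho> > 0"
    and X_ne: "X \<noteq> {}" and X_closed: "closed X" and X_convex: "convex X"
    and f_wc: "weakly_convex \<rho> f"
    \<comment> \<open>(A1) i.i.d. samples with law P on the probability space M\<close>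
    and P_prob: "prob_space P"
    and M_prob: "prob_space M"
    and xi_meas: "\<And>i. \<xi> i \<in> measurable M P"
    and xi_distr: "\<And>i. distr M P (\<xi> i) = P"
    and xi_indep: "prob_space.indep_vars M (\<lambda>_. P) \<xi> UNIV"
    \<comment> \<open>(A2)\<close>
    and U_open: "open U" and X_sub_U: "X \<subseteq> U"
    and G_meas: "(\<lambda>(x, \<omega>). G x \<omega>) \<in> borel_measurable (restrict_space borel U \<Otimes>\<^sub>M P)"
    and G_integrable: "\<And>x. x \<in> U \<Longrightarrow> integrable P (G x)"
    and G_subgrad: "\<And>x. x \<in> U \<Longrightarrow> (\<integral>\<omega>. G x \<omega> \<partial>P) \<in> subdiff f x"
    \<comment> \<open>(A3)\<close>
    and L_nonneg: "L \<ge> 0"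
    and G_bound: "\<And>x. x \<in> X \<Longrightarrow> (\<integral>\<^sup>+\<omega>. ennreal ((norm (G x \<omega>))\<^sup>2) \<partial>P) \<le> ennreal (L\<^sup>2)"
    \<comment> \<open>algorithm data\<close>
    and x0_in: "x0 \<in> X"
    and alpha_nonneg: "\<And>t. t \<le> T \<Longrightarrow> \<alpha> t \<ge> 0"
    and alpha_sum_pos: "(\<Sum>t\<le>T. \<alpha> t) > 0"
    \<comment> \<open>random index t*, independent of the samples\<close>
    and tstar_meas: "tstar \<in> measurable M (count_space UNIV)"
    and tstar_distr: "\<And>t. t \<le> T \<Longrightarrow>
        measure M {\<omega> \<in> space M. tstar \<omega> = t} = \<alpha> t / (\<Sum>i\<le>T. \<alpha> i)"
    and tstar_indep: "prob_space.indep_set M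
        (sets (vimage_algebra (space M) tstar (count_space UNIV)))
        (sets (vimage_algebra (space M) (\<lambda>\<omega> i. \<xi> i \<omega>) (Pi\<^sub>M UNIV (\<lambda>_. P))))"
  shows
    "(\<forall>\<rho>b > \<rho>. \<forall>t \<le> T.
        (\<integral>\<omega>. real_of_ereal (moreau_env (phi_of f X) (1 / \<rho>b) (sgd_iter X G \<alpha> \<xi> x0 (Suc t) \<omega>)) \<partial>M)
        \<le> (\<integral>\<omega>. real_of_ereal (moreau_env (phi_of f X) (1 / \<rho>b) (sgd_iter X G \<alpha> \<xi> x0 t \<omega>)) \<partial>M)
          - \<alpha> t * (\<rho>b - \<rho>) / \<rho>b *
            (\<integral>\<omega>. (norm (grad (\<lambda>z. real_of_ereal (moreau_env (phi_of f X) (1 / \<rho>b) z))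
                      (sgd_iter X G \<alpha> \<xi> x0 t \<omega>)))\<^sup>2 \<partial>M)
          + (\<alpha> t)\<^sup>2 * \<rho>b * L\<^sup>2 / 2)
     \<and> (\<forall>\<rho>b > \<rho>.
        ereal (\<integral>\<omega>. (norm (grad (\<lambda>z. real_of_ereal (moreau_env (phi_of f X) (1 / \<rho>b) z))
                      (sgd_iter X G \<alpha> \<xi> x0 (tstar \<omega>) \<omega>)))\<^sup>2 \<partial>M)
        \<le> ereal (\<rho>b / (\<rho>b - \<rho>)) *
           ((moreau_env (phi_of f X) (1 / \<rho>b) x0 - (INF y. phi_of f X y)
             + ereal (\<rho>b * L\<^sup>2 / 2 * (\<Sum>t\<le>T. (\<alpha> t)\<^sup>2)))
            / ereal (\<Sum>t\<le>T. \<alpha> t)))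
     \<and> (\<forall>\<gamma> > 0. (\<forall>t \<le> T. \<alpha> t = \<gamma> / sqrt (real T + 1)) \<longrightarrow>
        ereal (\<integral>\<omega>. (norm (grad (\<lambda>z. real_of_ereal (moreau_env (phi_of f X) (1 / (2 * \<rho>)) z))
                      (sgd_iter X G \<alpha> \<xi> x0 (tstar \<omega>) \<omega>)))\<^sup>2 \<partial>M)
        \<le> ereal 2 *
           ((moreau_env (phi_of f X) (1 / (2 * \<rho>)) x0 - (INF y. phi_of f X y)
             + ereal (\<rho> * L\<^sup>2 * \<gamma>\<^sup>2))
            / ereal (\<gamma> * sqrt (real T + 1))))"
proof -
  interpret proj_sgd_output \<rho> L X U f P M \<xi> G x0 \<alpha> T tstar
    by (intro proj_sgd_output.intro proj_sgd.intro proj_sgd_output_axioms.intro; fact)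
  show ?thesis
    using moreau_descent_gt moreau_grad_bound_gt moreau_grad_bound_constant_step by blast
qed

end
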